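(* Let $S=\mathcal{M}[G;I,\Lambda;P]$ be a Rees matrix semigroup where $G$ is a finitely generated group, $I=\{i_1,\ldots,i_n\}$ and $\Lambda=\{\lambda_1,\ldots,\lambda_m\}$ are finite, and $P=(p_{\lambda,i})_{\lambda\in\Lambda,i\in I}$ is an $m\times n$ matrix with entries in $G$. Then the right ends of $S$ (the poset $\Omega S$) form an anti-chain of cardinality $n\cdot|\Omega G|$, and the left ends of $S$ form an anti-chain of cardinality $m\cdot|\Omega G|$.
   Context: The Rees matrix semigroup $\mathcal{M}[G;I,\Lambda;P]$ is the set $I\times G\times\Lambda$ with multiplication $(i,g,\lambda)(j,h,\mu)=(i,g\,p_{\lambda,j}\,h,\mu)$. A digraph on $\Omega$ is a subset $\Gamma\subseteq\Omega\times\Omega$. A path is a sequence of pairwise distinct vertices $(v_0,v_1,\ldots)$ with $(v_i,v_{i+1})\in\Gamma$ (length 0 allowed); a ray is an infinite path; an anti-ray is an infinite sequence of distinct vertices with $(v_{i+1},v_i)\in\Gamma$. For infinite $\Sigma',\Sigma\subseteq\Omega$, $\Sigma'\preccurlyeq\Sigma$ means there are infinitely many pairwise vertex-disjoint paths from vertices of $\Sigma'$ to vertices of $\Sigma$. On rays and anti-rays $\preccurlyeq$ is a preorder with associated equivalence $\approx$; the ends are the $\approx$-classes of rays and anti-rays, and $\Omega\Gamma$ is the poset of ends. The right Cayley graph $\Gamma_r(S,A)$ has vertex set $S$ and edges $(x,xa)$; the left Cayley graph $\Gamma_l(S,A)$ has edges $(x,ax)$, for $x\in S$, $a\in A$. For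 a finitely generated semigroup $S$, the right ends $\Omega S$ are $\Omega\Gamma_r(S,A)$ and the left ends are $\Omega\Gamma_l(S,A)$ for any finite generating set $A$ (well defined up to isomorphism). For the group $G$, $\Omega G$ denotes its right ends as a semigroup. An anti-chain is a poset in which no two distinct elements are comparable. *)

theory Defs
  imports "HOL-Algebra.Generated_Groups" "HOL-Library.Equipollence"
begin

definition is_path :: "'v rel \<Rightarrow> 'v list \<Rightarrow> bool" where
  "is_path \<Gamma> p \<longleftrightarrow> p \<noteq> [] \<and> distinct p \<and> successively (\<lambda>x y. (x, y) \<in> \<Gamma>) p"

definition is_ray :: "'v rel \<Rightarrow> (nat \<Rightarrow> 'v) \<Rightarrow> bool" where
  "is_ray \<Gamma> f \<longleftrightarrow> inj f \<and> (\<forall>i. (f i, f (Suc i)) \<in> \<Gamma>)"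

definition is_antiray :: "'v rel \<Rightarrow> (nat \<Rightarrow> 'v) \<Rightarrow> bool" where
  "is_antiray \<Gamma> f \<longleftrightarrow> inj f \<and> (\<forall>i. (f (Suc i), f i) \<in> \<Gamma>)"

definition end_prec :: "'v rel \<Rightarrow> 'v set \<Rightarrow> 'v set \<Rightarrow> bool" where
  "end_prec \<Gamma> X Y \<longleftrightarrow>
     (\<exists>ps :: nat \<Rightarrow> 'v list.
        (\<forall>k. is_path \<Gamma> (ps k) \<and> hd (ps k) \<in> X \<and> last (ps k) \<in> Y) \<and>
        (\<forall>k l. k \<noteq> l \<longrightarrow> set (ps k) \<inter> set (ps l) = {}))"

definition rays_antirays :: "'v rel \<Rightarrow> (nat \<Rightarrow> 'v) set" where
  "rays_antirays \<Gamma> = {f. is_ray \<Gamma> f \<or> is_antiray \<Gamma> f}"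

definition end_equiv :: "'v rel \<Rightarrow> ((nat \<Rightarrow> 'v) \<times> (nat \<Rightarrow> 'v)) set" where
  "end_equiv \<Gamma> = {(r, s). r \<in> rays_antirays \<Gamma> \<and> s \<in> rays_antirays \<Gamma> \<and>
      end_prec \<Gamma> (range r) (range s) \<and> end_prec \<Gamma> (range s) (range r)}"

definition ends :: "'v rel \<Rightarrow> (nat \<Rightarrow> 'v) set set" where
  "ends \<Gamma> = rays_antirays \<Gamma> // end_equiv \<Gamma>"

definition end_le :: "'v rel \<Rightarrow> (nat \<Rightarrow> 'v) set \<Rightarrow> (nat \<Rightarrow> 'v) set \<Rightarrow> bool" where
  "end_le \<Gamma> E F \<longleftrightarrow> (\<exists>r\<in>E. \<exists>s\<in>F. end_prec \<Gamma> (range r) (range s))"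

definition ends_antichain :: "'v rel \<Rightarrow> bool" where
  "ends_antichain \<Gamma> \<longleftrightarrow>
     (\<forall>E\<in>ends \<Gamma>. \<forall>F\<in>ends \<Gamma>. E \<noteq> F \<longrightarrow> \<not> end_le \<Gamma> E F \<and> \<not> end_le \<Gamma> F E)"

inductive_set sg_generated :: "('a \<Rightarrow> 'a \<Rightarrow> 'a) \<Rightarrow> 'a set \<Rightarrow> 'a set"
  for mul :: "'a \<Rightarrow> 'a \<Rightarrow> 'a" and A :: "'a set" where
  gen: "a \<in> A \<Longrightarrow> a \<in> sg_generated mul A"
| mul_closed: "x \<in> sg_generated mul A \<Longrightarrow> y \<in> sg_generated mul A \<Longrightarrow> mul x y \<in> sg_generated mul A"

definition sg_generates :: "'a set \<Rightarrow> ('a \<Rightarrow> 'a \<Rightarrow> 'a) \<Rightarrow> 'a set \<Rightarrow> bool" where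
  "sg_generates S mul A \<longleftrightarrow> A \<subseteq> S \<and> sg_generated mul A = S"

definition right_cayley :: "'a set \<Rightarrow> ('a \<Rightarrow> 'a \<Rightarrow> 'a) \<Rightarrow> 'a set \<Rightarrow> 'a rel" where
  "right_cayley S mul A = {(x, mul x a) | x a. x \<in> S \<and> a \<in> A}"

definition left_cayley :: "'a set \<Rightarrow> ('a \<Rightarrow> 'a \<Rightarrow> 'a) \<Rightarrow> 'a set \<Rightarrow> 'a rel" where
  "left_cayley S mul A = {(x, mul a x) | x a. x \<in> S \<and> a \<in> A}"

definition rees_carrier :: "('g, 'b) monoid_scheme \<Rightarrow> 'i set \<Rightarrow> 'l set \<Rightarrow> ('i \<times> 'g \<times> 'l) set" where
  "rees_carrier G I L = I \<times> carrier G \<times> L"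

definition rees_mult :: "('g, 'b) monoid_scheme \<Rightarrow> ('l \<Rightarrow> 'i \<Rightarrow> 'g)
    \<Rightarrow> 'i \<times> 'g \<times> 'l \<Rightarrow> 'i \<times> 'g \<times> 'l \<Rightarrow> 'i \<times> 'g \<times> 'l" where
  "rees_mult G P x y = (case x of (i, g, l) \<Rightarrow> case y of (j, h, m) \<Rightarrow>
       (i, g \<otimes>\<^bsub>G\<^esub> P l j \<otimes>\<^bsub>G\<^esub> h, m))"

end

theory Submission
  imports Defs
begin

text \<open>Right multiplication by a fixed element moves every vertex of a right Cayley graph by
  a bounded distance. Hence \<open>(i, g, \<lambda>) \<mapsto> (i, g)\<close> and \<open>(i, g) \<mapsto> (i, g, \<lambda>\<^sub>0)\<close> are
  coarse maps, inverse to each other up to bounded distance, between the right Cayley graph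
  of \<open>\<M>[G; I, \<Lambda>; P]\<close> and \<open>|I|\<close> disjoint copies of the Cayley graph of \<open>G\<close>; for left ends
  one uses the opposite multiplication, \<open>|\<Lambda>|\<close> copies and \<open>g \<mapsto> g\<inverse>\<close>. All these digraphs are
  locally finite and every edge can be reversed by a path of bounded length. In such
  digraphs \<open>\<preccurlyeq>\<close> is symmetric, so the ends form an anti-chain, and a pair of coarse maps as
  above induces a bijection between the ends, sending a ray to a ray that follows its image.
  Finally the ends of disjoint copies of a digraph are the disjoint copies of its ends.\<close>

section \<open>Reachability avoiding a finite set\<close>

definition avoiding :: "'v rel \<Rightarrow> 'v set \<Rightarrow> 'v rel" where
  "avoiding \<Gamma> F = \<Gamma> \<inter> (- F) \<times> (- F)"

definition reach_avoiding :: "'v rel \<Rightarrow> 'v set \<Rightarrow> 'v \<Rightarrow> 'v \<Rightarrow> bool" where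
  "reach_avoiding \<Gamma> F u v \<longleftrightarrow> u \<notin> F \<and> (u, v) \<in> (avoiding \<Gamma> F)\<^sup>*"

text \<open>The avoidance form of \<open>end_prec\<close>, see \<open>end_prec_iff_linked\<close>.\<close>

definition linked :: "'v rel \<Rightarrow> 'v set \<Rightarrow> 'v set \<Rightarrow> bool" where
  "linked \<Gamma> X Y \<longleftrightarrow> (\<forall>F. finite F \<longrightarrow> (\<exists>x\<in>X. \<exists>y\<in>Y. reach_avoiding \<Gamma> F x y))"

lemma reach_avoiding_refl: "u \<notin> F \<Longrightarrow> reach_avoiding \<Gamma> F u u"
  by (simp add: reach_avoiding_def)

lemma reach_avoiding_trans:
  "reach_avoiding \<Gamma> F u v \<Longrightarrow> reach_avoiding \<Gamma> F v w \<Longrightarrow> reach_avoiding \<Gamma> F u w"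
  unfolding reach_avoiding_def by auto

lemma reach_avoiding_anti_mono:
  assumes "F \<subseteq> F'" "reach_avoiding \<Gamma> F' u v"
  shows "reach_avoiding \<Gamma> F u v"
proof -
  have "avoiding \<Gamma> F' \<subseteq> avoiding \<Gamma> F" using assms(1) by (auto simp: avoiding_def)
  then show ?thesis using assms unfolding reach_avoiding_def using rtrancl_mono by blast
qed

lemma reach_avoiding_target: "reach_avoiding \<Gamma> F u v \<Longrightarrow> v \<notin> F"
  unfolding reach_avoiding_def by (auto elim: rtranclE simp: avoiding_def)

lemma reach_avoiding_edge: "(u, v) \<in> \<Gamma> \<Longrightarrow> u \<notin> F \<Longrightarrow> v \<notin> F \<Longrightarrow> reach_avoiding \<Gamma> F u v"
  unfolding reach_avoiding_def avoiding_def by auto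

lemma reach_avoiding_converse: "reach_avoiding (\<Gamma>\<inverse>) F u v \<longleftrightarrow> reach_avoiding \<Gamma> F v u"
proof -
  have avoiding_converse: "avoiding (R\<inverse>) F = (avoiding R F)\<inverse>" for R :: "'a rel"
    unfolding avoiding_def by auto
  have *: "reach_avoiding \<Gamma> F v u" if "reach_avoiding (\<Gamma>\<inverse>) F u v" for \<Gamma> :: "'a rel" and u v
    using that reach_avoiding_target[OF that]
    unfolding reach_avoiding_def avoiding_converse rtrancl_converse by auto
  show ?thesis using *[of \<Gamma> u v] *[of "\<Gamma>\<inverse>" v u] by auto
qed

lemma linked_converse: "linked (\<Gamma>\<inverse>) X Y \<longleftrightarrow> linked \<Gamma> Y X"
  unfolding linked_def reach_avoiding_converse by fast

lemma successively_imp_rtrancl_avoiding: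
  "p \<noteq> [] \<Longrightarrow> successively (\<lambda>x y. (x, y) \<in> \<Gamma>) p \<Longrightarrow> set p \<inter> F = {}
   \<Longrightarrow> (hd p, last p) \<in> (avoiding \<Gamma> F)\<^sup>*"
proof (induction p rule: induct_list012)
  case (3 x y zs)
  then have "(x, y) \<in> avoiding \<Gamma> F" by (auto simp: avoiding_def)
  with 3 show ?case by (auto intro: converse_rtrancl_into_rtrancl)
qed simp_all

lemma rtrancl_imp_distinct_path:
  assumes "(x, y) \<in> R\<^sup>*"
  shows "\<exists>p. p \<noteq> [] \<and> distinct p \<and> successively (\<lambda>a b. (a, b) \<in> R) p \<and> hd p = x \<and> last p = y
            \<and> set p \<subseteq> insert x (Range R)"
  using assms
proof (induction rule: rtrancl_induct)
  case base
  show ?case by (intro exI[of _ "[x]"]) auto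
next
  case (step y z)
  then obtain p where p: "p \<noteq> []" "distinct p" "successively (\<lambda>a b. (a, b) \<in> R) p"
    "hd p = x" "last p = y" "set p \<subseteq> insert x (Range R)" by blast
  show ?case
  proof (cases "z \<in> set p")
    case True
    then obtain ys zs where pz: "p = ys @ z # zs" by (meson split_list)
    have "successively (\<lambda>a b. (a, b) \<in> R) (ys @ [z])"
      using p(3) unfolding pz by (auto simp: successively_append_iff)
    moreover have "hd (ys @ [z]) = x" using p(4) pz by (cases ys) auto
    ultimately show ?thesis using p pz by (intro exI[of _ "ys @ [z]"]) auto
  next
    case False
    have "successively (\<lambda>a b. (a, b) \<in> R) (p @ [z])"
      using p(3) p(1) p(5) step(2) by (auto simp: successively_append_iff)
    then show ?thesis using p False step(2) by (intro exI[of _ "p @ [z]"]) auto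
  qed
qed

lemma reach_avoiding_imp_path:
  assumes "reach_avoiding \<Gamma> F x y"
  shows "\<exists>p. is_path \<Gamma> p \<and> hd p = x \<and> last p = y \<and> set p \<inter> F = {}"
proof -
  from assms have xF: "x \<notin> F" and r: "(x, y) \<in> (avoiding \<Gamma> F)\<^sup>*"
    by (auto simp: reach_avoiding_def)
  from rtrancl_imp_distinct_path[OF r] obtain p where p: "p \<noteq> []" "distinct p"
    "successively (\<lambda>a b. (a, b) \<in> avoiding \<Gamma> F) p" "hd p = x" "last p = y"
    "set p \<subseteq> insert x (Range (avoiding \<Gamma> F))" by blast
  have "successively (\<lambda>a b. (a, b) \<in> \<Gamma>) p"
    using p(3) by (rule successively_mono) (auto simp: avoiding_def)
  moreover have "set p \<inter> F = {}" using p(6) xF by (auto simp: avoiding_def)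
  ultimately show ?thesis using p by (auto simp: is_path_def)
qed

text \<open>Each vertex lies on at most one of a family of disjoint paths, so a finite set
  meets only finitely many of them.\<close>

lemma end_prec_imp_linked:
  fixes \<Gamma> :: "'v rel"
  assumes "end_prec \<Gamma> X Y"
  shows "linked \<Gamma> X Y"
  unfolding linked_def
proof (intro allI impI)
  fix F :: "'v set" assume fin: "finite F"
  obtain ps :: "nat \<Rightarrow> 'v list"
    where ps: "\<And>k. is_path \<Gamma> (ps k) \<and> hd (ps k) \<in> X \<and> last (ps k) \<in> Y"
      and disj: "\<And>k l. k \<noteq> l \<Longrightarrow> set (ps k) \<inter> set (ps l) = {}"
    using assms unfolding end_prec_def by auto
  have "finite {k. f \<in> set (ps k)}" for f
  proof -
    have "{k. f \<in> set (ps k)} \<subseteq> {SOME k. f \<in> set (ps k)}"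
    proof
      fix k assume "k \<in> {k. f \<in> set (ps k)}"
      then have k: "f \<in> set (ps k)" by simp
      then have "f \<in> set (ps (SOME k. f \<in> set (ps k)))" by (rule someI)
      then show "k \<in> {SOME k. f \<in> set (ps k)}" using disj k by blast
    qed
    then show ?thesis using finite_subset by blast
  qed
  moreover have "{k. set (ps k) \<inter> F \<noteq> {}} \<subseteq> (\<Union>f\<in>F. {k. f \<in> set (ps k)})" by auto
  ultimately have "finite {k. set (ps k) \<inter> F \<noteq> {}}" using fin by (meson finite_UN_I finite_subset)
  from ex_new_if_finite[OF infinite_UNIV_nat this]
  obtain k where k: "set (ps k) \<inter> F = {}" by blast
  have "(hd (ps k), last (ps k)) \<in> (avoiding \<Gamma> F)\<^sup>*"
    using ps[of k] k by (intro successively_imp_rtrancl_avoiding) (auto simp: is_path_def)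
  moreover have "hd (ps k) \<notin> F" using ps[of k] k hd_in_set by (fastforce simp: is_path_def)
  ultimately show "\<exists>x\<in>X. \<exists>y\<in>Y. reach_avoiding \<Gamma> F x y"
    using ps[of k] by (auto simp: reach_avoiding_def)
qed

text \<open>The converse builds the disjoint paths greedily, each one avoiding the union of
  all previous ones.\<close>

lemma linked_imp_end_prec:
  assumes "linked \<Gamma> X Y"
  shows "end_prec \<Gamma> X Y"
proof -
  define next_path where "next_path U =
    (SOME p. is_path \<Gamma> p \<and> hd p \<in> X \<and> last p \<in> Y \<and> set p \<inter> U = {})" for U
  have next_path: "is_path \<Gamma> (next_path U) \<and> hd (next_path U) \<in> X \<and> last (next_path U) \<in> Y
      \<and> set (next_path U) \<inter> U = {}" if "finite U" for U
  proof -
    from assms that obtain x y where "x \<in> X" "y \<in> Y" "reach_avoiding \<Gamma> U x y"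
      unfolding linked_def by blast
    then have "\<exists>p. is_path \<Gamma> p \<and> hd p \<in> X \<and> last p \<in> Y \<and> set p \<inter> U = {}"
      using reach_avoiding_imp_path by fastforce
    then show ?thesis unfolding next_path_def by (rule someI_ex)
  qed
  define U where "U = rec_nat {} (\<lambda>k V. V \<union> set (next_path V))"
  have U0: "U 0 = {}" and US: "U (Suc k) = U k \<union> set (next_path (U k))" for k
    by (simp_all add: U_def)
  have finU: "finite (U k)" for k by (induction k) (simp_all add: U0 US)
  have U_mono: "k \<le> l \<Longrightarrow> U k \<subseteq> U l" for k l
    by (induction l rule: dec_induct) (auto simp: US)
  define ps where "ps k = next_path (U k)" for k
  have disj: "set (ps a) \<inter> set (ps b) = {}" if "a < b" for a b
  proof -
    have "set (ps a) \<subseteq> U b" using U_mono[of "Suc a" b] that by (auto simp: US ps_def)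
    with next_path[OF finU[of b]] show ?thesis by (auto simp: ps_def)
  qed
  have "set (ps k) \<inter> set (ps l) = {}" if "k \<noteq> l" for k l
    using disj[of k l] disj[of l k] that by (cases "k < l") auto
  then show ?thesis
    unfolding end_prec_def using next_path[OF finU] by (intro exI[of _ ps]) (auto simp: ps_def)
qed

lemma end_prec_iff_linked: "end_prec \<Gamma> X Y \<longleftrightarrow> linked \<Gamma> X Y"
  using end_prec_imp_linked linked_imp_end_prec by blast

section \<open>Bounded distances, coarse maps and tame digraphs\<close>

definition near :: "'v rel \<Rightarrow> nat \<Rightarrow> 'v \<Rightarrow> 'v \<Rightarrow> bool" where
  "near \<Gamma> C u v \<longleftrightarrow> (\<exists>n\<le>C. (u, v) \<in> \<Gamma> ^^ n)"

definition back_ball :: "'v rel \<Rightarrow> nat \<Rightarrow> 'v set \<Rightarrow> 'v set" where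
  "back_ball \<Gamma> C F = {u. \<exists>f\<in>F. near \<Gamma> C u f}"

text \<open>An ad hoc notion: Cayley graphs of groups, and of the Rees matrix semigroups over
  them, are tame.\<close>

definition tame :: "'v rel \<Rightarrow> nat \<Rightarrow> bool" where
  "tame \<Gamma> K \<longleftrightarrow> (\<forall>u. finite (\<Gamma> `` {u})) \<and> (\<forall>u. finite (\<Gamma>\<inverse> `` {u})) \<and>
     (\<forall>u v. (u, v) \<in> \<Gamma> \<longrightarrow> near \<Gamma> K v u)"

definition tail_connected :: "'v rel \<Rightarrow> 'v set \<Rightarrow> bool" where
  "tail_connected \<Gamma> Y \<longleftrightarrow> (\<forall>F. finite F \<longrightarrow>
     (\<exists>F'. finite F' \<and> (\<forall>y1\<in>Y - F'. \<forall>y2\<in>Y - F'. reach_avoiding \<Gamma> F y1 y2)))"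

lemma near_refl: "near \<Gamma> C u u"
  unfolding near_def by (intro exI[of _ 0]) auto

lemma near_edge: "(u, v) \<in> \<Gamma> \<Longrightarrow> near \<Gamma> 1 u v"
  unfolding near_def by (intro exI[of _ 1]) auto

lemma near_trans:
  assumes "near \<Gamma> C u v" "near \<Gamma> D v w"
  shows "near \<Gamma> (C + D) u w"
proof -
  obtain m n where "m \<le> C" "(u, v) \<in> \<Gamma> ^^ m" "n \<le> D" "(v, w) \<in> \<Gamma> ^^ n"
    using assms unfolding near_def by blast
  then show ?thesis unfolding near_def by (intro exI[of _ "m + n"]) (auto intro: relpow_trans)
qed

lemma near_mono: "near \<Gamma> C u v \<Longrightarrow> C \<le> D \<Longrightarrow> near \<Gamma> D u v"
  unfolding near_def using le_trans by blast

lemma relpow_converse_iff: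
  fixes \<Gamma> :: "'v rel"
  shows "(u, v) \<in> (\<Gamma>\<inverse>) ^^ n \<longleftrightarrow> (v, u) \<in> \<Gamma> ^^ n"
proof (induction n arbitrary: u v)
  case (Suc n)
  show ?case
  proof
    assume "(u, v) \<in> (\<Gamma>\<inverse>) ^^ Suc n"
    then obtain w where "(u, w) \<in> (\<Gamma>\<inverse>) ^^ n" "(w, v) \<in> \<Gamma>\<inverse>" by (rule relpow_Suc_E)
    then have "(v, w) \<in> \<Gamma>" "(w, u) \<in> \<Gamma> ^^ n" using Suc.IH by auto
    then show "(v, u) \<in> \<Gamma> ^^ Suc n" by (rule relpow_Suc_I2)
  next
    assume "(v, u) \<in> \<Gamma> ^^ Suc n"
    then obtain w where "(v, w) \<in> \<Gamma>" "(w, u) \<in> \<Gamma> ^^ n" by (rule relpow_Suc_E2)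
    then have "(u, w) \<in> (\<Gamma>\<inverse>) ^^ n" "(w, v) \<in> \<Gamma>\<inverse>" using Suc.IH by auto
    then show "(u, v) \<in> (\<Gamma>\<inverse>) ^^ Suc n" by (rule relpow_Suc_I)
  qed
qed (auto elim: relpow_0_E intro: relpow_0_I)

lemma near_converse: "near (\<Gamma>\<inverse>) C u v \<longleftrightarrow> near \<Gamma> C v u"
  unfolding near_def relpow_converse_iff ..

definition coarse_map :: "'a set \<Rightarrow> 'a rel \<Rightarrow> 'b rel \<Rightarrow> nat \<Rightarrow> ('a \<Rightarrow> 'b) \<Rightarrow> bool" where
  "coarse_map V \<Gamma>1 \<Gamma>2 C \<phi> \<longleftrightarrow> \<Gamma>1 \<subseteq> V \<times> V \<and>
     (\<forall>u v. (u, v) \<in> \<Gamma>1 \<longrightarrow> near \<Gamma>2 C (\<phi> u) (\<phi> v)) \<and> (\<forall>w. finite {u\<in>V. \<phi> u = w})"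

lemma coarse_map_converse: "coarse_map V \<Gamma>1 \<Gamma>2 C \<phi> \<Longrightarrow> coarse_map V (\<Gamma>1\<inverse>) (\<Gamma>2\<inverse>) C \<phi>"
  unfolding coarse_map_def near_converse by auto

lemma coarse_map_near:
  assumes "coarse_map V \<Gamma>1 \<Gamma>2 C \<phi>" "near \<Gamma>1 n u v"
  shows "near \<Gamma>2 (C * n) (\<phi> u) (\<phi> v)"
proof -
  have "near \<Gamma>2 (C * m) (\<phi> u) (\<phi> v)" if "(u, v) \<in> \<Gamma>1 ^^ m" for m v
    using that
  proof (induction m arbitrary: v)
    case (Suc m)
    from Suc.prems obtain w where w: "(u, w) \<in> \<Gamma>1 ^^ m" "(w, v) \<in> \<Gamma>1" by (rule relpow_Suc_E)
    have "near \<Gamma>2 C (\<phi> w) (\<phi> v)" using assms(1) w(2) unfolding coarse_map_def by blast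
    with Suc.IH[OF w(1)] have "near \<Gamma>2 (C * m + C) (\<phi> u) (\<phi> v)" by (rule near_trans)
    then show ?case by (simp add: add.commute)
  qed (simp add: near_refl)
  moreover obtain m where "m \<le> n" "(u, v) \<in> \<Gamma>1 ^^ m" using assms(2) unfolding near_def by blast
  ultimately show ?thesis by (meson mult_le_mono2 near_mono)
qed

lemma coarse_map_mono:
  assumes "coarse_map V \<Gamma>1 \<Gamma>2 C \<phi>" "C \<le> D"
  shows "coarse_map V \<Gamma>1 \<Gamma>2 D \<phi>"
proof -
  have "near \<Gamma>2 D (\<phi> u) (\<phi> v)" if "(u, v) \<in> \<Gamma>1" for u v
    using assms(1) that unfolding coarse_map_def by (blast intro: near_mono[OF _ assms(2)])
  then show ?thesis using assms(1) unfolding coarse_map_def by blast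
qed

lemma finite_coarse_preimage:
  assumes "coarse_map V \<Gamma>1 \<Gamma>2 C \<phi>" "finite W"
  shows "finite {u\<in>V. \<phi> u \<in> W}"
proof -
  have "{u\<in>V. \<phi> u \<in> W} = (\<Union>w\<in>W. {u\<in>V. \<phi> u = w})" by auto
  then show ?thesis using assms unfolding coarse_map_def by auto
qed

lemma coarse_map_converse_id: "tame \<Gamma> K \<Longrightarrow> coarse_map UNIV (\<Gamma>\<inverse>) \<Gamma> K id"
  unfolding tame_def coarse_map_def by auto

lemma near_reverse:
  assumes "tame \<Gamma> K" "near \<Gamma> C u v"
  shows "near \<Gamma> (K * C) v u"
  using coarse_map_near[OF coarse_map_converse_id[OF assms(1)]] assms(2)
  by (simp add: near_converse)

lemma finite_near_from:
  assumes "\<forall>u. finite (\<Gamma> `` {u})"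
  shows "finite {v. near \<Gamma> C u v}"
proof (induction C)
  case 0
  have "{v. near \<Gamma> 0 u v} = {u}" unfolding near_def by auto
  then show ?case by simp
next
  case (Suc C)
  have "{v. near \<Gamma> (Suc C) u v} \<subseteq> {v. near \<Gamma> C u v} \<union> (\<Union>w\<in>{v. near \<Gamma> C u v}. \<Gamma> `` {w})"
  proof
    fix v assume "v \<in> {v. near \<Gamma> (Suc C) u v}"
    then obtain n where n: "n \<le> Suc C" "(u, v) \<in> \<Gamma> ^^ n" unfolding near_def by auto
    show "v \<in> {v. near \<Gamma> C u v} \<union> (\<Union>w\<in>{v. near \<Gamma> C u v}. \<Gamma> `` {w})"
    proof (cases n)
      case 0 then show ?thesis using n near_refl[of \<Gamma> C u] by auto
    next
      case (Suc m)
      with n obtain w where "(u, w) \<in> \<Gamma> ^^ m" "(w, v) \<in> \<Gamma>" by (auto elim: relpow_Suc_E)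
      moreover have "m \<le> C" using n Suc by simp
      ultimately show ?thesis unfolding near_def by blast
    qed
  qed
  then show ?case using Suc assms by (auto intro: finite_subset)
qed

lemma finite_back_ball:
  assumes "\<forall>u. finite (\<Gamma>\<inverse> `` {u})" "finite F"
  shows "finite (back_ball \<Gamma> C F)"
proof -
  have "back_ball \<Gamma> C F = (\<Union>f\<in>F. {u. near (\<Gamma>\<inverse>) C f u})"
    unfolding back_ball_def near_converse by auto
  then show ?thesis using finite_near_from[OF assms(1)] assms(2) by auto
qed

lemma notin_back_ballD: "u \<notin> back_ball \<Gamma> C F \<Longrightarrow> u \<notin> F"
  unfolding back_ball_def using near_refl by fast

lemma near_imp_reach_avoiding:
  assumes "near \<Gamma> C u v" "u \<notin> back_ball \<Gamma> C F"
  shows "reach_avoiding \<Gamma> F u v"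
proof -
  have notF: "w \<notin> F" if "(u, w) \<in> \<Gamma> ^^ m" "m \<le> C" for m w
    using assms(2) that unfolding back_ball_def near_def by blast
  obtain k where k: "k \<le> C" "(u, v) \<in> \<Gamma> ^^ k" using assms(1) unfolding near_def by auto
  have "(u, w) \<in> (avoiding \<Gamma> F)\<^sup>*" if "m \<le> k" "(u, w) \<in> \<Gamma> ^^ m" for m w
    using that
  proof (induction m arbitrary: w)
    case (Suc m)
    then obtain w' where w': "(u, w') \<in> \<Gamma> ^^ m" "(w', w) \<in> \<Gamma>" by (blast elim: relpow_Suc_E)
    have "w' \<notin> F" using notF[OF w'(1)] Suc.prems(1) k(1) by simp
    moreover have "w \<notin> F" using notF[OF Suc.prems(2)] Suc.prems(1) k(1) by simp
    moreover have "(u, w') \<in> (avoiding \<Gamma> F)\<^sup>*" using Suc.IH[OF _ w'(1)] Suc.prems(1) by simp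
    ultimately show ?case using w'(2) by (auto simp: avoiding_def intro: rtrancl_into_rtrancl)
  qed simp
  moreover have "u \<notin> F" using assms(2) by (rule notin_back_ballD)
  ultimately show ?thesis using k unfolding reach_avoiding_def by blast
qed

text \<open>Tameness pulls back along a coarse map \<open>\<phi>\<close> that has a coarse inverse \<open>\<psi>\<close> up to
  bounded distance in both directions: an edge \<open>x \<rightarrow> y\<close> is undone by going from \<open>y\<close> to
  \<open>\<psi> (\<phi> y)\<close>, following the image of a return path from \<open>\<phi> y\<close> to \<open>\<phi> x\<close>, and
  coming back to \<open>x\<close>.\<close>

lemma tame_if_coarse_retract:
  fixes \<Gamma>1 :: "'a rel" and \<Gamma>2 :: "'b rel"
  assumes tame: "tame \<Gamma>2 K" and \<phi>: "coarse_map V1 \<Gamma>1 \<Gamma>2 C \<phi>" and \<psi>: "coarse_map V2 \<Gamma>2 \<Gamma>1 C \<psi>"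
    and out_fin: "\<forall>u. finite (\<Gamma>1 `` {u})"
    and to_retract: "\<And>x. x \<in> V1 \<Longrightarrow> near \<Gamma>1 C x (\<psi> (\<phi> x))"
    and from_retract: "\<And>x. x \<in> V1 \<Longrightarrow> near \<Gamma>1 C (\<psi> (\<phi> x)) x"
  shows "tame \<Gamma>1 (C + C * (K * C) + C)"
proof -
  have "finite (\<Gamma>1\<inverse> `` {y})" for y
  proof -
    have "\<Gamma>1\<inverse> `` {y} \<subseteq> {u\<in>V1. \<phi> u \<in> back_ball \<Gamma>2 C {\<phi> y}}"
    proof
      fix u assume "u \<in> \<Gamma>1\<inverse> `` {y}"
      then have "(u, y) \<in> \<Gamma>1" by simp
      then have "u \<in> V1" "near \<Gamma>2 C (\<phi> u) (\<phi> y)" using \<phi> unfolding coarse_map_def by blast+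
      then show "u \<in> {u\<in>V1. \<phi> u \<in> back_ball \<Gamma>2 C {\<phi> y}}" unfolding back_ball_def by blast
    qed
    moreover have "finite {u\<in>V1. \<phi> u \<in> back_ball \<Gamma>2 C {\<phi> y}}"
      using tame unfolding tame_def by (intro finite_coarse_preimage[OF \<phi>] finite_back_ball) auto
    ultimately show ?thesis by (rule finite_subset)
  qed
  moreover have "near \<Gamma>1 (C + C * (K * C) + C) y x" if xy: "(x, y) \<in> \<Gamma>1" for x y
  proof -
    have V: "x \<in> V1" "y \<in> V1" using \<phi> xy unfolding coarse_map_def by blast+
    have "near \<Gamma>2 C (\<phi> x) (\<phi> y)" using \<phi> xy unfolding coarse_map_def by blast
    then have "near \<Gamma>2 (K * C) (\<phi> y) (\<phi> x)" by (rule near_reverse[OF tame])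
    then have "near \<Gamma>1 (C * (K * C)) (\<psi> (\<phi> y)) (\<psi> (\<phi> x))" by (rule coarse_map_near[OF \<psi>])
    with to_retract[OF V(2)] have "near \<Gamma>1 (C + C * (K * C)) y (\<psi> (\<phi> x))" by (rule near_trans)
    then show ?thesis using from_retract[OF V(1)] by (rule near_trans)
  qed
  ultimately show ?thesis using out_fin unfolding tame_def by blast
qed

section \<open>Linkedness in tame digraphs\<close>

lemma rtrancl_avoiding_reverse:
  assumes "tame \<Gamma> K" "(x, y) \<in> (avoiding \<Gamma> (back_ball \<Gamma> K F))\<^sup>*"
  shows "(y, x) \<in> (avoiding \<Gamma> F)\<^sup>*"
  using assms(2)
proof (induction rule: rtrancl_induct)
  case (step b c)
  from step(2) have "(b, c) \<in> \<Gamma>" "c \<notin> back_ball \<Gamma> K F" unfolding avoiding_def by auto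
  then have "near \<Gamma> K c b" "c \<notin> back_ball \<Gamma> K F" using assms(1) unfolding tame_def by blast+
  then have "reach_avoiding \<Gamma> F c b" by (rule near_imp_reach_avoiding)
  then have "(c, b) \<in> (avoiding \<Gamma> F)\<^sup>*" unfolding reach_avoiding_def by blast
  then show ?case using step.IH by (rule rtrancl_trans)
qed simp

lemma linked_sym:
  fixes \<Gamma> :: "'v rel"
  assumes "tame \<Gamma> K" "linked \<Gamma> X Y"
  shows "linked \<Gamma> Y X"
  unfolding linked_def
proof (intro allI impI)
  fix F :: "'v set" assume "finite F"
  with assms(1) have "finite (back_ball \<Gamma> K F)"
    unfolding tame_def by (blast intro: finite_back_ball)
  then obtain x y where xy: "x \<in> X" "y \<in> Y" "reach_avoiding \<Gamma> (back_ball \<Gamma> K F) x y"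
    using assms(2) unfolding linked_def by blast
  have "y \<notin> F" using reach_avoiding_target[OF xy(3)] by (rule notin_back_ballD)
  moreover have "(y, x) \<in> (avoiding \<Gamma> F)\<^sup>*"
    using xy(3) rtrancl_avoiding_reverse[OF assms(1)] unfolding reach_avoiding_def by blast
  ultimately show "\<exists>y\<in>Y. \<exists>x\<in>X. reach_avoiding \<Gamma> F y x"
    using xy unfolding reach_avoiding_def by blast
qed

lemma linked_trans:
  fixes \<Gamma> :: "'v rel"
  assumes "linked \<Gamma> X Y" "tail_connected \<Gamma> Y" "linked \<Gamma> Y Z"
  shows "linked \<Gamma> X Z"
  unfolding linked_def
proof (intro allI impI)
  fix F :: "'v set" assume fin: "finite F"
  then obtain F' where F': "finite F'" "\<forall>y1\<in>Y - F'. \<forall>y2\<in>Y - F'. reach_avoiding \<Gamma> F y1 y2"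
    using assms(2) unfolding tail_connected_def by blast
  have fin': "finite (F \<union> F')" using fin F' by simp
  obtain x y1 where xy: "x \<in> X" "y1 \<in> Y" "reach_avoiding \<Gamma> (F \<union> F') x y1"
    using assms(1) fin' unfolding linked_def by blast
  obtain y2 z where yz: "y2 \<in> Y" "z \<in> Z" "reach_avoiding \<Gamma> (F \<union> F') y2 z"
    using assms(3) fin' unfolding linked_def by blast
  have "y1 \<notin> F \<union> F'" by (rule reach_avoiding_target[OF xy(3)])
  moreover have "y2 \<notin> F \<union> F'" using yz(3) unfolding reach_avoiding_def by blast
  ultimately have mid: "reach_avoiding \<Gamma> F y1 y2" using F'(2) xy(2) yz(1) by blast
  have "reach_avoiding \<Gamma> F x y1" by (rule reach_avoiding_anti_mono[OF _ xy(3)]) simp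
  moreover have "reach_avoiding \<Gamma> F y2 z" by (rule reach_avoiding_anti_mono[OF _ yz(3)]) simp
  ultimately have "reach_avoiding \<Gamma> F x z" using mid reach_avoiding_trans by metis
  then show "\<exists>x\<in>X. \<exists>z\<in>Z. reach_avoiding \<Gamma> F x z" using xy(1) yz(2) by blast
qed

lemma linked_refl:
  fixes \<Gamma> :: "'v rel"
  assumes "infinite X"
  shows "linked \<Gamma> X X"
  unfolding linked_def
proof (intro allI impI)
  fix F :: "'v set" assume "finite F"
  then have "infinite (X - F)" using assms by (rule Diff_infinite_finite)
  then have "X - F \<noteq> {}" by (metis finite.emptyI)
  then obtain x where x: "x \<in> X" "x \<notin> F" by blast
  then show "\<exists>x\<in>X. \<exists>y\<in>X. reach_avoiding \<Gamma> F x y" using reach_avoiding_refl[OF x(2)] by blast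
qed

lemma rays_antirays_inj: "r \<in> rays_antirays \<Gamma> \<Longrightarrow> inj r"
  unfolding rays_antirays_def is_ray_def is_antiray_def by blast

lemma rays_antirays_infinite: "r \<in> rays_antirays \<Gamma> \<Longrightarrow> infinite (range r)"
  using rays_antirays_inj finite_imageD infinite_UNIV_nat by blast

lemma rays_antirays_step:
  "r \<in> rays_antirays \<Gamma> \<Longrightarrow> (r n, r (Suc n)) \<in> \<Gamma> \<or> (r (Suc n), r n) \<in> \<Gamma>"
  unfolding rays_antirays_def is_ray_def is_antiray_def by blast

lemma range_rays_antirays_subset:
  assumes "\<Gamma> \<subseteq> V \<times> V" "r \<in> rays_antirays \<Gamma>"
  shows "range r \<subseteq> V"
proof
  fix x assume "x \<in> range r"
  then obtain n where "x = r n" by blast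
  then show "x \<in> V" using rays_antirays_step[OF assms(2), of n] assms(1) by blast
qed

lemma reach_avoiding_edge_both_ways:
  assumes "tame \<Gamma> K" "(u, v) \<in> \<Gamma>" "u \<notin> back_ball \<Gamma> K F" "v \<notin> back_ball \<Gamma> K F"
  shows "reach_avoiding \<Gamma> F u v \<and> reach_avoiding \<Gamma> F v u"
proof
  show "reach_avoiding \<Gamma> F u v"
    using assms(2) notin_back_ballD[OF assms(3)] notin_back_ballD[OF assms(4)]
    by (rule reach_avoiding_edge)
  have "near \<Gamma> K v u" using assms(1,2) unfolding tame_def by blast
  then show "reach_avoiding \<Gamma> F v u" using assms(4) by (rule near_imp_reach_avoiding)
qed

text \<open>Outside the finite \<open>K\<close>-ball around \<open>F\<close> each step of a ray or anti-ray can be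
  traversed in both directions while avoiding \<open>F\<close>.\<close>

lemma tail_connected_rays_antirays:
  fixes \<Gamma> :: "'v rel"
  assumes "tame \<Gamma> K" "r \<in> rays_antirays \<Gamma>"
  shows "tail_connected \<Gamma> (range r)"
  unfolding tail_connected_def
proof (intro allI impI)
  fix F :: "'v set" assume "finite F"
  with assms(1) have "finite (back_ball \<Gamma> K F)"
    unfolding tame_def by (blast intro: finite_back_ball)
  then have "finite (r -` back_ball \<Gamma> K F)"
    using finite_vimageI rays_antirays_inj[OF assms(2)] by blast
  then obtain N where N: "\<And>n. N \<le> n \<Longrightarrow> r n \<notin> back_ball \<Gamma> K F"
    by (meson finite_nat_set_iff_bounded leD vimageI)
  have edge_step: "reach_avoiding \<Gamma> F (r m) (r (Suc m)) \<and> reach_avoiding \<Gamma> F (r (Suc m)) (r m)"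
    if "N \<le> m" for m
  proof -
    have "r m \<notin> back_ball \<Gamma> K F" "r (Suc m) \<notin> back_ball \<Gamma> K F" using N that by auto
    then show ?thesis
      using rays_antirays_step[OF assms(2), of m] reach_avoiding_edge_both_ways[OF assms(1)] by blast
  qed
  have "reach_avoiding \<Gamma> F (r a) (r b) \<and> reach_avoiding \<Gamma> F (r b) (r a)"
    if "N \<le> a" "a \<le> b" for a b
    using that(2)
  proof (induction b rule: dec_induct)
    case base
    show ?case using reach_avoiding_refl[OF notin_back_ballD[OF N[OF that(1)]]] by blast
  next
    case (step b)
    have "N \<le> b" using that(1) step(1) by simp
    then show ?case using step.IH edge_step[of b] reach_avoiding_trans by meson
  qed
  then have "reach_avoiding \<Gamma> F (r a) (r b)" if "N \<le> a" "N \<le> b" for a b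
    using that nat_le_linear[of a b] by blast
  moreover have "N \<le> n" if "r n \<notin> r ` {..<N}" for n
    using that by (meson imageI lessThan_iff not_le)
  ultimately show "\<exists>F'. finite F' \<and> (\<forall>y1\<in>range r - F'. \<forall>y2\<in>range r - F'. reach_avoiding \<Gamma> F y1 y2)"
    by (intro exI[of _ "r ` {..<N}"]) auto
qed

lemma end_equiv_tame_iff:
  assumes "tame \<Gamma> K"
  shows "(r, s) \<in> end_equiv \<Gamma> \<longleftrightarrow>
    r \<in> rays_antirays \<Gamma> \<and> s \<in> rays_antirays \<Gamma> \<and> linked \<Gamma> (range r) (range s)"
  unfolding end_equiv_def end_prec_iff_linked using linked_sym[OF assms] by blast

lemma equiv_end_equiv:
  assumes "tame \<Gamma> K"
  shows "equiv (rays_antirays \<Gamma>) (end_equiv \<Gamma>)"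
proof (rule equivI)
  show "refl_on (rays_antirays \<Gamma>) (end_equiv \<Gamma>)"
  proof (rule refl_onI)
    fix r assume "r \<in> rays_antirays \<Gamma>"
    then show "(r, r) \<in> end_equiv \<Gamma>"
      using linked_refl rays_antirays_infinite by (auto simp: end_equiv_tame_iff[OF assms])
  qed
  show "end_equiv \<Gamma> \<subseteq> rays_antirays \<Gamma> \<times> rays_antirays \<Gamma>" unfolding end_equiv_def by blast
  show "sym (end_equiv \<Gamma>)" unfolding end_equiv_def by (rule symI) blast
  show "trans (end_equiv \<Gamma>)"
  proof (rule transI)
    fix r s t assume "(r, s) \<in> end_equiv \<Gamma>" "(s, t) \<in> end_equiv \<Gamma>"
    then show "(r, t) \<in> end_equiv \<Gamma>"
      using linked_trans tail_connected_rays_antirays[OF assms]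
      unfolding end_equiv_tame_iff[OF assms] by blast
  qed
qed

lemma linked_cong:
  assumes "tame \<Gamma> K" "tail_connected \<Gamma> X" "tail_connected \<Gamma> X'"
    "tail_connected \<Gamma> Y" "tail_connected \<Gamma> Y'" "linked \<Gamma> X X'" "linked \<Gamma> Y Y'"
  shows "linked \<Gamma> X Y \<longleftrightarrow> linked \<Gamma> X' Y'"
proof
  assume "linked \<Gamma> X Y"
  with linked_sym[OF assms(1,6)] assms(2) have "linked \<Gamma> X' Y" by (rule linked_trans)
  with assms(4,7) show "linked \<Gamma> X' Y'" by (blast intro: linked_trans)
next
  assume "linked \<Gamma> X' Y'"
  with assms(6) assms(3) have "linked \<Gamma> X Y'" by (blast intro: linked_trans)
  with assms(5) linked_sym[OF assms(1,7)] show "linked \<Gamma> X Y" by (blast intro: linked_trans)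
qed

text \<open>In a tame digraph \<open>\<preccurlyeq>\<close> is symmetric, so comparable ends coincide.\<close>

lemma ends_antichain_if_tame:
  assumes "tame \<Gamma> K"
  shows "ends_antichain \<Gamma>"
proof -
  note eq = equiv_end_equiv[OF assms]
  have end_class: "E = end_equiv \<Gamma> `` {r} \<and> r \<in> rays_antirays \<Gamma>"
    if E: "E \<in> ends \<Gamma>" "r \<in> E" for E r
  proof -
    obtain a where a: "a \<in> rays_antirays \<Gamma>" "E = end_equiv \<Gamma> `` {a}"
      using E(1) unfolding ends_def by (rule quotientE)
    then have "(a, r) \<in> end_equiv \<Gamma>" using E(2) by blast
    then show ?thesis using a(2) equiv_class_eq[OF eq] unfolding end_equiv_def by blast
  qed
  have "E = F" if "E \<in> ends \<Gamma>" "F \<in> ends \<Gamma>" "r \<in> E" "s \<in> F" "end_prec \<Gamma> (range r) (range s)"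
    for E F r s
  proof -
    have "(r, s) \<in> end_equiv \<Gamma>"
      using end_class that by (auto simp: end_equiv_tame_iff[OF assms] end_prec_iff_linked)
    then show ?thesis using end_class that equiv_class_eq[OF eq] by metis
  qed
  then show ?thesis unfolding ends_antichain_def end_le_def by blast
qed

section \<open>From coarse paths to rays\<close>

definition lazy_walk :: "'v rel \<Rightarrow> (nat \<Rightarrow> 'v) \<Rightarrow> bool" where
  "lazy_walk \<Gamma> w \<longleftrightarrow> (\<forall>t. w t = w (Suc t) \<or> (w t, w (Suc t)) \<in> \<Gamma>)"

lemma lazy_walk_near:
  assumes "lazy_walk \<Gamma> w"
  shows "near \<Gamma> n (w a) (w (a + n))"
proof (induction n)
  case (Suc n)
  have "near \<Gamma> 1 (w (a + n)) (w (a + Suc n))"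
    using assms near_refl[of \<Gamma> 1] near_edge unfolding lazy_walk_def by (metis add_Suc_right)
  with Suc show ?case using near_trans by fastforce
qed (simp add: near_refl)

lemma lazy_walk_rtrancl_avoiding:
  assumes "lazy_walk \<Gamma> w" "\<forall>s\<ge>a. w s \<notin> F" "a \<le> b"
  shows "(w a, w b) \<in> (avoiding \<Gamma> F)\<^sup>*"
  using assms(3)
proof (induction b rule: dec_induct)
  case (step b)
  have "w b = w (Suc b) \<or> (w b, w (Suc b)) \<in> avoiding \<Gamma> F"
    using assms(1,2) step(1) unfolding lazy_walk_def avoiding_def by auto
  then show ?case using step(3) by (metis rtrancl.rtrancl_into_rtrancl)
qed simp

lemma relpow_imp_lazy_walk:
  assumes "(u, v) \<in> \<Gamma> ^^ n"
  shows "\<exists>\<sigma>. lazy_walk \<Gamma> \<sigma> \<and> \<sigma> 0 = u \<and> (\<forall>s\<ge>n. \<sigma> s = v)"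
  using assms
proof (induction n arbitrary: u)
  case 0
  then show ?case by (intro exI[of _ "\<lambda>_. v"]) (auto simp: lazy_walk_def)
next
  case (Suc n)
  then obtain x where x: "(u, x) \<in> \<Gamma>" "(x, v) \<in> \<Gamma> ^^ n" by (blast elim: relpow_Suc_E2)
  then obtain \<sigma> where \<sigma>: "lazy_walk \<Gamma> \<sigma>" "\<sigma> 0 = x" "\<forall>s\<ge>n. \<sigma> s = v" using Suc.IH by blast
  have "lazy_walk \<Gamma> (case_nat u \<sigma>)"
    using \<sigma>(1,2) x(1) unfolding lazy_walk_def by (auto split: nat.split)
  moreover have "\<forall>s\<ge>Suc n. case_nat u \<sigma> s = v"
    using \<sigma>(3) by (auto split: nat.split)
  ultimately show ?case by (intro exI[of _ "case_nat u \<sigma>"]) simp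
qed

lemma lazy_walk_through:
  assumes "\<And>k. near \<Gamma> C (f k) (f (Suc k))"
  obtains w where "lazy_walk \<Gamma> w" "\<And>k. w (k * Suc C) = f k"
    "\<And>t. near \<Gamma> (Suc C) (w t) (f (Suc (t div Suc C)))"
proof -
  define D where "D = Suc C"
  have "\<exists>\<sigma>. lazy_walk \<Gamma> \<sigma> \<and> \<sigma> 0 = f k \<and> (\<forall>s\<ge>D. \<sigma> s = f (Suc k))" for k
  proof -
    obtain n where "n \<le> C" "(f k, f (Suc k)) \<in> \<Gamma> ^^ n" using assms unfolding near_def by blast
    then show ?thesis using relpow_imp_lazy_walk unfolding D_def by fastforce
  qed
  then obtain \<sigma> where \<sigma>: "\<And>k. lazy_walk \<Gamma> (\<sigma> k)" "\<And>k. \<sigma> k 0 = f k"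
    "\<And>k s. D \<le> s \<Longrightarrow> \<sigma> k s = f (Suc k)" by metis
  define w where "w t = \<sigma> (t div D) (t mod D)" for t
  have D: "0 < D" by (simp add: D_def)
  have "lazy_walk \<Gamma> w" unfolding lazy_walk_def
  proof
    fix t
    let ?k = "t div D" and ?s = "t mod D"
    have "\<sigma> ?k ?s = \<sigma> ?k (Suc ?s) \<or> (\<sigma> ?k ?s, \<sigma> ?k (Suc ?s)) \<in> \<Gamma>"
      using \<sigma>(1) unfolding lazy_walk_def by blast
    moreover have "w (Suc t) = \<sigma> ?k (Suc ?s)"
    proof (cases "Suc ?s = D")
      case True
      then show ?thesis using \<sigma>(2,3) by (simp add: w_def div_Suc mod_Suc)
    next
      case False
      then show ?thesis by (simp add: w_def div_Suc mod_Suc)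
    qed
    ultimately show "w t = w (Suc t) \<or> (w t, w (Suc t)) \<in> \<Gamma>" by (simp add: w_def)
  qed
  moreover have "w (k * D) = f k" for k using D \<sigma>(2) by (simp add: w_def)
  moreover have "near \<Gamma> D (w t) (f (Suc (t div D)))" for t
  proof -
    have "near \<Gamma> (D - t mod D) (w t) (\<sigma> (t div D) (t mod D + (D - t mod D)))"
      unfolding w_def by (rule lazy_walk_near[OF \<sigma>(1)])
    moreover have "t mod D < D" using D by simp
    ultimately have "near \<Gamma> (D - t mod D) (w t) (\<sigma> (t div D) D)" by simp
    then show ?thesis using \<sigma>(3) near_mono by fastforce
  qed
  ultimately show ?thesis using that unfolding D_def by blast
qed

text \<open>Cutting the detours out of a lazy walk with finite fibres, by jumping to the last visit
  of the current vertex, yields a ray.\<close>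

lemma lazy_walk_imp_ray:
  assumes walk: "lazy_walk \<Gamma> w" and fin: "\<And>v. finite {t. w t = v}"
  obtains R \<tau> where "is_ray \<Gamma> R" "\<And>n. R n = w (\<tau> n)" "\<And>n. n \<le> \<tau> n"
proof -
  define last_visit where "last_visit v = Max {t. w t = v}" for v
  have last_visit: "w (last_visit (w s)) = w s" "s \<le> last_visit (w s)" for s
    using Max_in[OF fin, of "w s"] Max_ge[OF fin, of s "w s"] unfolding last_visit_def by auto
  have after_last: "w t \<noteq> w s" if "last_visit (w s) < t" for s t
    using that Max_ge[OF fin, of t "w s"] unfolding last_visit_def by auto
  define \<tau> where "\<tau> = rec_nat (last_visit (w 0)) (\<lambda>_ t. last_visit (w (Suc t)))"
  have \<tau>0: "\<tau> 0 = last_visit (w 0)" and \<tau>S: "\<tau> (Suc n) = last_visit (w (Suc (\<tau> n)))" for n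
    by (simp_all add: \<tau>_def)
  have \<tau>_last: "last_visit (w (\<tau> n)) = \<tau> n" for n
    by (cases n) (simp_all add: \<tau>0 \<tau>S last_visit(1))
  have "strict_mono \<tau>"
    unfolding strict_mono_Suc_iff using last_visit(2) by (simp add: \<tau>S Suc_le_lessD)
  then have \<tau>_ge: "n \<le> \<tau> n" for n by (rule strict_mono_imp_increasing)
  define R where "R n = w (\<tau> n)" for n
  have "(R n, R (Suc n)) \<in> \<Gamma>" for n
  proof -
    have "R (Suc n) = w (Suc (\<tau> n))" unfolding R_def \<tau>S using last_visit(1) by simp
    moreover have "w (Suc (\<tau> n)) \<noteq> w (\<tau> n)" using after_last[of "\<tau> n" "Suc (\<tau> n)"] \<tau>_last[of n] by simp
    ultimately show ?thesis using walk unfolding lazy_walk_def R_def by metis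
  qed
  moreover have "inj R"
  proof (rule injI)
    fix a b assume "R a = R b"
    then have "\<tau> a = \<tau> b" using \<tau>_last[of a] \<tau>_last[of b] unfolding R_def by metis
    then show "a = b" using \<open>strict_mono \<tau>\<close> strict_mono_eq by metis
  qed
  ultimately show ?thesis using that[of R \<tau>] \<tau>_ge unfolding is_ray_def R_def by blast
qed

lemma lazy_walk_subsequence_linked:
  fixes \<Gamma> :: "'v rel"
  assumes walk: "lazy_walk \<Gamma> w" and fin: "\<And>v. finite {t. w t = v}"
    and hits: "\<And>t. \<exists>t'\<ge>t. w t' \<in> Z"
    and R: "\<And>n. R n = w (\<tau> n)" "\<And>n. n \<le> \<tau> n"
  shows "linked \<Gamma> (range R) Z"
  unfolding linked_def
proof (intro allI impI)
  fix F :: "'v set" assume "finite F"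
  then have "finite (\<Union>v\<in>F. {t. w t = v})" using fin by blast
  then obtain M where M: "\<And>t. w t \<in> F \<Longrightarrow> t < M"
    by (metis (mono_tags, lifting) UN_iff finite_nat_set_iff_bounded mem_Collect_eq)
  have avoid: "\<forall>s\<ge>\<tau> M. w s \<notin> F" using M R(2) le_trans not_le by metis
  obtain t where t: "\<tau> M \<le> t" "w t \<in> Z" using hits by blast
  have "reach_avoiding \<Gamma> F (R M) (w t)"
    using lazy_walk_rtrancl_avoiding[OF walk avoid t(1)] avoid R(1) unfolding reach_avoiding_def by simp
  then show "\<exists>x\<in>range R. \<exists>y\<in>Z. reach_avoiding \<Gamma> F x y" using t(2) by blast
qed

section \<open>The transfer of ends along coarse maps\<close>

text \<open>Avoiding the preimage of the \<open>C\<close>-ball around \<open>F\<close> upstairs lets the image avoid \<open>F\<close>.\<close>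

lemma coarse_map_reach_avoiding:
  assumes c: "coarse_map V \<Gamma>1 \<Gamma>2 C \<phi>" and x: "x \<in> V"
    and r: "reach_avoiding \<Gamma>1 {u\<in>V. \<phi> u \<in> back_ball \<Gamma>2 C F} x y"
  shows "reach_avoiding \<Gamma>2 F (\<phi> x) (\<phi> y)"
proof -
  let ?F1 = "{u\<in>V. \<phi> u \<in> back_ball \<Gamma>2 C F}"
  have "(x, y) \<in> (avoiding \<Gamma>1 ?F1)\<^sup>*" "\<phi> x \<notin> back_ball \<Gamma>2 C F"
    using r x unfolding reach_avoiding_def by auto
  then show ?thesis
  proof (induction rule: rtrancl_induct)
    case base
    show ?case using reach_avoiding_refl[OF notin_back_ballD[OF base]] .
  next
    case (step y z)
    then have yz: "(y, z) \<in> \<Gamma>1" "y \<notin> ?F1" unfolding avoiding_def by blast+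
    then have "y \<in> V" using c unfolding coarse_map_def by blast
    then have "near \<Gamma>2 C (\<phi> y) (\<phi> z)" "\<phi> y \<notin> back_ball \<Gamma>2 C F"
      using c yz unfolding coarse_map_def by blast+
    then have "reach_avoiding \<Gamma>2 F (\<phi> y) (\<phi> z)" by (rule near_imp_reach_avoiding)
    with step.IH[OF step.prems] show ?case by (rule reach_avoiding_trans)
  qed
qed

lemma linked_image:
  fixes \<Gamma>2 :: "'b rel"
  assumes c: "coarse_map V \<Gamma>1 \<Gamma>2 C \<phi>" and in_fin: "\<forall>u. finite (\<Gamma>2\<inverse> `` {u})"
    and X: "X \<subseteq> V" and l: "linked \<Gamma>1 X Y"
  shows "linked \<Gamma>2 (\<phi> ` X) (\<phi> ` Y)"
  unfolding linked_def
proof (intro allI impI)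
  fix F :: "'b set" assume "finite F"
  then have "finite {u\<in>V. \<phi> u \<in> back_ball \<Gamma>2 C F}"
    using finite_coarse_preimage[OF c] finite_back_ball[OF in_fin] by blast
  from l[unfolded linked_def, rule_format, OF this]
  obtain x y where xy: "x \<in> X" "y \<in> Y" "reach_avoiding \<Gamma>1 {u\<in>V. \<phi> u \<in> back_ball \<Gamma>2 C F} x y"
    by blast
  then have "reach_avoiding \<Gamma>2 F (\<phi> x) (\<phi> y)" using coarse_map_reach_avoiding[OF c] X by blast
  then show "\<exists>x\<in>\<phi> ` X. \<exists>y\<in>\<phi> ` Y. reach_avoiding \<Gamma>2 F x y" using xy by blast
qed

lemma tail_connected_image:
  fixes \<Gamma>2 :: "'b rel"
  assumes c: "coarse_map V \<Gamma>1 \<Gamma>2 C \<phi>" and in_fin: "\<forall>u. finite (\<Gamma>2\<inverse> `` {u})"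
    and Y: "Y \<subseteq> V" and t: "tail_connected \<Gamma>1 Y"
  shows "tail_connected \<Gamma>2 (\<phi> ` Y)"
  unfolding tail_connected_def
proof (intro allI impI)
  fix F :: "'b set" assume "finite F"
  then have "finite {u\<in>V. \<phi> u \<in> back_ball \<Gamma>2 C F}"
    using finite_coarse_preimage[OF c] finite_back_ball[OF in_fin] by blast
  from t[unfolded tail_connected_def, rule_format, OF this]
  obtain F' where F': "finite F'"
    "\<forall>y1\<in>Y - F'. \<forall>y2\<in>Y - F'. reach_avoiding \<Gamma>1 {u\<in>V. \<phi> u \<in> back_ball \<Gamma>2 C F} y1 y2"
    by blast
  show "\<exists>F'. finite F' \<and> (\<forall>y1\<in>\<phi> ` Y - F'. \<forall>y2\<in>\<phi> ` Y - F'. reach_avoiding \<Gamma>2 F y1 y2)"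
  proof (intro exI[of _ "\<phi> ` F'"] conjI ballI)
    fix z1 z2 assume z: "z1 \<in> \<phi> ` Y - \<phi> ` F'" "z2 \<in> \<phi> ` Y - \<phi> ` F'"
    then obtain y1 y2 where y: "y1 \<in> Y" "y2 \<in> Y" "z1 = \<phi> y1" "z2 = \<phi> y2" by blast
    then have "y1 \<in> Y - F'" "y2 \<in> Y - F'" using z by blast+
    then have "reach_avoiding \<Gamma>1 {u\<in>V. \<phi> u \<in> back_ball \<Gamma>2 C F} y1 y2" using F'(2) by blast
    moreover have "y1 \<in> V" using y(1) Y by blast
    ultimately show "reach_avoiding \<Gamma>2 F z1 z2"
      unfolding y(3,4) by (rule coarse_map_reach_avoiding[OF c, rotated])
  qed (use F'(1) in simp)
qed

lemma linked_near_image: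
  fixes \<Gamma> :: "'v rel"
  assumes in_fin: "\<forall>u. finite (\<Gamma>\<inverse> `` {u})" and g: "\<forall>x\<in>V. near \<Gamma> C x (g x)"
    and X: "X \<subseteq> V" "infinite X"
  shows "linked \<Gamma> X (g ` X)"
  unfolding linked_def
proof (intro allI impI)
  fix F :: "'v set" assume "finite F"
  then have "finite (back_ball \<Gamma> C F)" by (rule finite_back_ball[OF in_fin])
  then have "infinite (X - back_ball \<Gamma> C F)" using X(2) by (rule Diff_infinite_finite)
  then have "X - back_ball \<Gamma> C F \<noteq> {}" by (metis finite.emptyI)
  then obtain x where x: "x \<in> X" "x \<notin> back_ball \<Gamma> C F" by blast
  have "near \<Gamma> C x (g x)" using g X(1) x(1) by blast
  then have "reach_avoiding \<Gamma> F x (g x)" using x(2) by (rule near_imp_reach_avoiding)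
  then show "\<exists>x\<in>X. \<exists>y\<in>g ` X. reach_avoiding \<Gamma> F x y" using x by blast
qed

text \<open>The image of a ray under a coarse map is a coarse path; interpolating it by a lazy
  walk and cutting out its detours gives a ray of the target linked to the image.\<close>

lemma ray_linked_to_coarse_image:
  fixes \<Gamma>2 :: "'b rel"
  assumes c: "coarse_map V \<Gamma>1 \<Gamma>2 C \<phi>" and out_fin: "\<forall>u. finite (\<Gamma>2 `` {u})"
    and r: "is_ray \<Gamma>1 r"
  obtains R where "is_ray \<Gamma>2 R" "linked \<Gamma>2 (range R) (\<phi> ` range r)"
proof -
  have edges: "(r k, r (Suc k)) \<in> \<Gamma>1" for k using r unfolding is_ray_def by blast
  then have rV: "r k \<in> V" for k using c unfolding coarse_map_def by blast
  have "near \<Gamma>2 C (\<phi> (r k)) (\<phi> (r (Suc k)))" for k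
    using c edges unfolding coarse_map_def by blast
  then obtain w where walk: "lazy_walk \<Gamma>2 w" and at: "\<And>k. w (k * Suc C) = \<phi> (r k)"
    and close: "\<And>t. near \<Gamma>2 (Suc C) (w t) (\<phi> (r (Suc (t div Suc C))))"
    by (rule lazy_walk_through[of \<Gamma>2 C "\<lambda>k. \<phi> (r k)"]) blast+
  define D where "D = Suc C"
  have fin: "finite {t. w t = v}" for v
  proof -
    have "finite {u\<in>V. \<phi> u \<in> {x. near \<Gamma>2 D v x}}"
      using finite_coarse_preimage[OF c] finite_near_from[OF out_fin] by blast
    moreover have "inj r" using r unfolding is_ray_def by blast
    ultimately have "finite (r -` {u\<in>V. \<phi> u \<in> {x. near \<Gamma>2 D v x}})" by (rule finite_vimageI)
    moreover have "{k. near \<Gamma>2 D v (\<phi> (r k))} \<subseteq> r -` {u\<in>V. \<phi> u \<in> {x. near \<Gamma>2 D v x}}"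
      using rV by auto
    ultimately have "finite {k. near \<Gamma>2 D v (\<phi> (r k))}" by (rule finite_subset[rotated])
    then obtain M where M: "\<And>k. near \<Gamma>2 D v (\<phi> (r k)) \<Longrightarrow> k < M"
      unfolding finite_nat_set_iff_bounded by blast
    have "t < M * D" if "w t = v" for t
    proof -
      have "Suc (t div D) < M" using M close[of t] that unfolding D_def by blast
      then have "t div D < M" by simp
      then show ?thesis using div_less_iff_less_mult[of D t M] unfolding D_def by simp
    qed
    then show ?thesis by (meson finite_nat_set_iff_bounded mem_Collect_eq)
  qed
  have hits: "\<exists>t'\<ge>t. w t' \<in> \<phi> ` range r" for t
    using at[of t] by (intro exI[of _ "t * Suc C"]) simp
  obtain R \<tau> where "is_ray \<Gamma>2 R" "\<And>n. R n = w (\<tau> n)" "\<And>n. n \<le> \<tau> n"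
    using lazy_walk_imp_ray[OF walk fin] by blast
  then show ?thesis using that lazy_walk_subsequence_linked[OF walk fin hits] by blast
qed

lemma tame_converse: "tame \<Gamma> K \<Longrightarrow> tame (\<Gamma>\<inverse>) K"
  unfolding tame_def near_converse by auto

lemma is_antiray_iff_is_ray_converse: "is_antiray \<Gamma> r \<longleftrightarrow> is_ray (\<Gamma>\<inverse>) r"
  unfolding is_antiray_def is_ray_def by auto

lemma ray_antiray_linked_to_coarse_image:
  assumes t: "tame \<Gamma>2 K" and c: "coarse_map V \<Gamma>1 \<Gamma>2 C \<phi>" and r: "r \<in> rays_antirays \<Gamma>1"
  shows "\<exists>R\<in>rays_antirays \<Gamma>2. linked \<Gamma>2 (range R) (\<phi> ` range r)"
proof -
  from r have "is_ray \<Gamma>1 r \<or> is_antiray \<Gamma>1 r" unfolding rays_antirays_def by blast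
  then show ?thesis
  proof
    assume "is_ray \<Gamma>1 r"
    then obtain R where "is_ray \<Gamma>2 R" "linked \<Gamma>2 (range R) (\<phi> ` range r)"
      using ray_linked_to_coarse_image[OF c] t unfolding tame_def by blast
    then show ?thesis unfolding rays_antirays_def by blast
  next
    assume "is_antiray \<Gamma>1 r"
    then have "is_ray (\<Gamma>1\<inverse>) r" by (simp add: is_antiray_iff_is_ray_converse)
    then obtain R where R: "is_ray (\<Gamma>2\<inverse>) R" "linked (\<Gamma>2\<inverse>) (range R) (\<phi> ` range r)"
      using ray_linked_to_coarse_image[OF coarse_map_converse[OF c]] tame_converse[OF t]
      unfolding tame_def by blast
    have "linked \<Gamma>2 (range R) (\<phi> ` range r)"
      using R(2) linked_sym[OF t] by (simp add: linked_converse)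
    with R(1) show ?thesis by (auto simp: rays_antirays_def is_antiray_iff_is_ray_converse)
  qed
qed

lemma eqpoll_quotients:
  assumes r: "equiv A r" and s: "equiv B s" and f: "\<forall>x\<in>A. f x \<in> B"
    and respects: "\<forall>x\<in>A. \<forall>y\<in>A. (x, y) \<in> r \<longleftrightarrow> (f x, f y) \<in> s"
    and onto: "\<forall>y\<in>B. \<exists>x\<in>A. (f x, y) \<in> s"
  shows "A // r \<approx> B // s"
proof -
  define h where "h X = s `` {f (SOME x. x \<in> X)}" for X
  have h: "h (r `` {x}) = s `` {f x}" if "x \<in> A" for x
  proof -
    have "x \<in> r `` {x}" using equiv_class_self[OF r that] .
    then have "(SOME y. y \<in> r `` {x}) \<in> r `` {x}" by (rule someI)
    then have "(x, SOME y. y \<in> r `` {x}) \<in> r" by simp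
    moreover have "(SOME y. y \<in> r `` {x}) \<in> A" using \<open>(x, _) \<in> r\<close> r unfolding equiv_def refl_on_def
      by (meson equiv_class_eq_iff r)
    ultimately show ?thesis using that respects f equiv_class_eq[OF s] unfolding h_def by metis
  qed
  have "bij_betw h (A // r) (B // s)"
  proof (rule bij_betw_imageI)
    show "inj_on h (A // r)"
    proof (rule inj_onI)
      fix X Y assume "X \<in> A // r" "Y \<in> A // r" "h X = h Y"
      then obtain x y where "x \<in> A" "y \<in> A" "X = r `` {x}" "Y = r `` {y}" "s `` {f x} = s `` {f y}"
        using h by (metis quotientE)
      then show "X = Y" using f respects eq_equiv_class_iff[OF s] equiv_class_eq[OF r] by metis
    qed
    show "h ` (A // r) = B // s"
    proof
      show "h ` (A // r) \<subseteq> B // s"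
      proof
        fix Z assume "Z \<in> h ` (A // r)"
        then obtain x where "x \<in> A" "Z = h (r `` {x})" by (auto elim: quotientE)
        then show "Z \<in> B // s" using h f by (auto intro: quotientI)
      qed
      show "B // s \<subseteq> h ` (A // r)"
      proof
        fix Z assume "Z \<in> B // s"
        then obtain b x where "b \<in> B" "Z = s `` {b}" "x \<in> A" "(f x, b) \<in> s"
          using onto by (metis quotientE)
        then have "Z = h (r `` {x})" using h equiv_class_eq[OF s] by metis
        then show "Z \<in> h ` (A // r)" using \<open>x \<in> A\<close> by (blast intro: quotientI)
      qed
    qed
  qed
  then show ?thesis unfolding eqpoll_def by blast
qed

text \<open>Coarse maps in both directions whose composites stay within bounded distance of the
  identity: a quasi-isometry between tame digraphs, up to the vertex sets.\<close>

locale coarse_equivalence =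
  fixes V1 :: "'a set" and \<Gamma>1 :: "'a rel" and K1 :: nat
    and V2 :: "'b set" and \<Gamma>2 :: "'b rel" and K2 :: nat
    and C :: nat and \<phi> :: "'a \<Rightarrow> 'b" and \<psi> :: "'b \<Rightarrow> 'a"
  assumes tame1: "tame \<Gamma>1 K1" and tame2: "tame \<Gamma>2 K2"
    and coarse_\<phi>: "coarse_map V1 \<Gamma>1 \<Gamma>2 C \<phi>" and coarse_\<psi>: "coarse_map V2 \<Gamma>2 \<Gamma>1 C \<psi>"
    and \<phi>_into: "\<phi> ` V1 \<subseteq> V2" and \<psi>_into: "\<psi> ` V2 \<subseteq> V1"
    and near_\<psi>\<phi>: "\<And>x. x \<in> V1 \<Longrightarrow> near \<Gamma>1 C x (\<psi> (\<phi> x))"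
    and near_\<phi>\<psi>: "\<And>y. y \<in> V2 \<Longrightarrow> near \<Gamma>2 C y (\<phi> (\<psi> y))"
begin

lemma swap: "coarse_equivalence V2 \<Gamma>2 K2 V1 \<Gamma>1 K1 C \<psi> \<phi>"
  using coarse_equivalence_axioms unfolding coarse_equivalence_def by blast

lemma range_subset: "r \<in> rays_antirays \<Gamma>1 \<Longrightarrow> range r \<subseteq> V1"
  using coarse_\<phi> range_rays_antirays_subset unfolding coarse_map_def by blast

lemma in_finite1: "\<forall>u. finite (\<Gamma>1\<inverse> `` {u})" and in_finite2: "\<forall>u. finite (\<Gamma>2\<inverse> `` {u})"
  using tame1 tame2 unfolding tame_def by blast+

lemma tail_connected_image_ray:
  "r \<in> rays_antirays \<Gamma>1 \<Longrightarrow> tail_connected \<Gamma>2 (\<phi> ` range r)"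
  using tail_connected_image[OF coarse_\<phi> in_finite2 range_subset tail_connected_rays_antirays[OF tame1]] .

lemma tail_connected_image_image_ray:
  assumes "r \<in> rays_antirays \<Gamma>1"
  shows "tail_connected \<Gamma>1 (\<psi> ` \<phi> ` range r)"
proof -
  have "\<phi> ` range r \<subseteq> V2" using range_subset[OF assms] \<phi>_into by blast
  with tail_connected_image_ray[OF assms] show ?thesis
    using tail_connected_image[OF coarse_\<psi> in_finite1] by blast
qed

lemma linked_image_image_ray:
  assumes "r \<in> rays_antirays \<Gamma>1"
  shows "linked \<Gamma>1 (range r) (\<psi> ` \<phi> ` range r)"
proof -
  have "\<forall>x\<in>V1. near \<Gamma>1 C x ((\<psi> \<circ> \<phi>) x)" using near_\<psi>\<phi> by simp
  then have "linked \<Gamma>1 (range r) ((\<psi> \<circ> \<phi>) ` range r)"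
    using linked_near_image[OF in_finite1 _ range_subset[OF assms] rays_antirays_infinite[OF assms]]
    by blast
  then show ?thesis by (simp add: image_comp)
qed

lemma linked_image_iff:
  assumes r: "r \<in> rays_antirays \<Gamma>1" and s: "s \<in> rays_antirays \<Gamma>1"
  shows "linked \<Gamma>2 (\<phi> ` range r) (\<phi> ` range s) \<longleftrightarrow> linked \<Gamma>1 (range r) (range s)"
proof
  assume "linked \<Gamma>2 (\<phi> ` range r) (\<phi> ` range s)"
  moreover have "\<phi> ` range r \<subseteq> V2" using range_subset[OF r] \<phi>_into by blast
  ultimately have "linked \<Gamma>1 (\<psi> ` \<phi> ` range r) (\<psi> ` \<phi> ` range s)"
    using linked_image[OF coarse_\<psi> in_finite1] by blast
  then show "linked \<Gamma>1 (range r) (range s)"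
    using linked_cong[OF tame1 tail_connected_rays_antirays[OF tame1 r]
        tail_connected_image_image_ray[OF r] tail_connected_rays_antirays[OF tame1 s]
        tail_connected_image_image_ray[OF s] linked_image_image_ray[OF r]
        linked_image_image_ray[OF s]] by blast
next
  assume "linked \<Gamma>1 (range r) (range s)"
  then show "linked \<Gamma>2 (\<phi> ` range r) (\<phi> ` range s)"
    by (rule linked_image[OF coarse_\<phi> in_finite2 range_subset[OF r]])
qed

text \<open>Each ray or anti-ray \<open>r\<close> of \<open>\<Gamma>1\<close> is sent to a ray or anti-ray of \<open>\<Gamma>2\<close>
  equivalent to \<open>\<phi> ` range r\<close>; this map on representatives induces the bijection of ends.\<close>

theorem ends_eqpoll: "ends \<Gamma>1 \<approx> ends \<Gamma>2"
proof -
  interpret swapped: coarse_equivalence V2 \<Gamma>2 K2 V1 \<Gamma>1 K1 C \<psi> \<phi> by (rule swap)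
  let ?A = "rays_antirays \<Gamma>1" and ?B = "rays_antirays \<Gamma>2"
  define f where "f r = (SOME R. R \<in> ?B \<and> linked \<Gamma>2 (range R) (\<phi> ` range r))"
    for r :: "nat \<Rightarrow> 'a"
  have f: "f r \<in> ?B \<and> linked \<Gamma>2 (range (f r)) (\<phi> ` range r)" if "r \<in> ?A" for r
    unfolding f_def using ray_antiray_linked_to_coarse_image[OF tame2 coarse_\<phi> that]
    by (rule someI2_bex) blast
  have tail_f: "tail_connected \<Gamma>2 (range (f r))" if "r \<in> ?A" for r
    using tail_connected_rays_antirays[OF tame2] f[OF that] by blast
  have "(r, s) \<in> end_equiv \<Gamma>1 \<longleftrightarrow> (f r, f s) \<in> end_equiv \<Gamma>2" if r: "r \<in> ?A" and s: "s \<in> ?A" for r s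
  proof -
    have "linked \<Gamma>2 (range (f r)) (range (f s)) \<longleftrightarrow> linked \<Gamma>2 (\<phi> ` range r) (\<phi> ` range s)"
      using f r s by (intro linked_cong[OF tame2 tail_f tail_connected_image_ray
            tail_f tail_connected_image_ray]) blast+
    then show ?thesis
      using f r s linked_image_iff[OF r s] by (auto simp: end_equiv_tame_iff[OF tame1]
          end_equiv_tame_iff[OF tame2])
  qed
  moreover have "\<exists>r\<in>?A. (f r, s) \<in> end_equiv \<Gamma>2" if s: "s \<in> ?B" for s
  proof -
    obtain r where r: "r \<in> ?A" "linked \<Gamma>1 (range r) (\<psi> ` range s)"
      using ray_antiray_linked_to_coarse_image[OF tame1 coarse_\<psi> s] by blast
    have "linked \<Gamma>2 (range (f r)) (\<phi> ` range r)" using f[OF r(1)] by blast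
    moreover have "linked \<Gamma>2 (\<phi> ` range r) (\<phi> ` \<psi> ` range s)"
      using r(2) by (rule linked_image[OF coarse_\<phi> in_finite2 range_subset[OF r(1)]])
    moreover have "linked \<Gamma>2 (\<phi> ` \<psi> ` range s) (range s)"
      using linked_sym[OF tame2 swapped.linked_image_image_ray[OF s]] .
    ultimately have "linked \<Gamma>2 (range (f r)) (range s)"
      using tail_connected_image_ray[OF r(1)] swapped.tail_connected_image_image_ray[OF s]
      by (meson linked_trans)
    then show ?thesis using r(1) f[OF r(1)] s by (auto simp: end_equiv_tame_iff[OF tame2])
  qed
  ultimately have "?A // end_equiv \<Gamma>1 \<approx> ?B // end_equiv \<Gamma>2"
    using eqpoll_quotients[OF equiv_end_equiv[OF tame1] equiv_end_equiv[OF tame2]] f by blast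
  then show ?thesis unfolding ends_def .
qed

end

section \<open>Disjoint copies of a digraph\<close>

definition copies :: "'i set \<Rightarrow> 'v rel \<Rightarrow> ('i \<times> 'v) rel" where
  "copies I \<Gamma> = {((i, u), (i, v)) | i u v. i \<in> I \<and> (u, v) \<in> \<Gamma>}"

lemma copies_iff: "((i, u), (j, v)) \<in> copies I \<Gamma> \<longleftrightarrow> i = j \<and> i \<in> I \<and> (u, v) \<in> \<Gamma>"
  unfolding copies_def by auto

lemma relpow_copies: "(u, v) \<in> \<Gamma> ^^ n \<Longrightarrow> i \<in> I \<Longrightarrow> ((i, u), (i, v)) \<in> copies I \<Gamma> ^^ n"
proof (induction n arbitrary: v)
  case (Suc n)
  from Suc.prems(1) obtain w where w: "(u, w) \<in> \<Gamma> ^^ n" "(w, v) \<in> \<Gamma>" by (rule relpow_Suc_E)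
  have "((i, u), (i, w)) \<in> copies I \<Gamma> ^^ n" by (rule Suc.IH[OF w(1) Suc.prems(2)])
  moreover have "((i, w), (i, v)) \<in> copies I \<Gamma>" using w(2) Suc.prems(2) by (simp add: copies_iff)
  ultimately show ?case by (rule relpow_Suc_I)
qed simp

lemma near_copies:
  assumes "near \<Gamma> C u v" "i \<in> I"
  shows "near (copies I \<Gamma>) C (i, u) (i, v)"
proof -
  obtain n where n: "n \<le> C" "(u, v) \<in> \<Gamma> ^^ n" using assms(1) unfolding near_def by blast
  then show ?thesis unfolding near_def using relpow_copies[OF n(2) assms(2)] by blast
qed

lemma tame_copies:
  fixes I :: "'i set" and \<Gamma> :: "'v rel"
  assumes "tame \<Gamma> K"
  shows "tame (copies I \<Gamma>) K"
  unfolding tame_def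
proof (intro conjI allI impI)
  fix p :: "'i \<times> 'v"
  obtain i u where p: "p = (i, u)" by (rule prod.exhaust)
  have "copies I \<Gamma> `` {p} \<subseteq> {i} \<times> \<Gamma> `` {u}" unfolding p copies_def by auto
  moreover have "finite ({i} \<times> \<Gamma> `` {u})" using assms unfolding tame_def by simp
  ultimately show "finite (copies I \<Gamma> `` {p})" by (rule finite_subset)
  have "(copies I \<Gamma>)\<inverse> `` {p} \<subseteq> {i} \<times> \<Gamma>\<inverse> `` {u}" unfolding p copies_def by auto
  moreover have "finite ({i} \<times> \<Gamma>\<inverse> `` {u})" using assms unfolding tame_def by simp
  ultimately show "finite ((copies I \<Gamma>)\<inverse> `` {p})" by (rule finite_subset)
next
  fix p q assume "(p, q) \<in> copies I \<Gamma>"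
  then obtain i u v where e: "p = (i, u)" "q = (i, v)" "i \<in> I" "(u, v) \<in> \<Gamma>"
    unfolding copies_def by blast
  have "near \<Gamma> K v u" using assms e(4) unfolding tame_def by blast
  then show "near (copies I \<Gamma>) K q p" unfolding e(1,2) using e(3) by (rule near_copies)
qed

lemma rtrancl_avoiding_copies:
  assumes "(a, b) \<in> (avoiding (copies I \<Gamma>) F)\<^sup>*"
  shows "fst a = fst b \<and> (snd a, snd b) \<in> (avoiding \<Gamma> (Pair (fst a) -` F))\<^sup>*"
  using assms
proof (induction rule: rtrancl_induct)
  case (step b c)
  then obtain j u v where e: "b = (j, u)" "c = (j, v)" "(u, v) \<in> \<Gamma>" "b \<notin> F" "c \<notin> F"
    unfolding copies_def avoiding_def by blast
  then have "(u, v) \<in> avoiding \<Gamma> (Pair (fst a) -` F)" using step.IH unfolding avoiding_def by auto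
  then show ?case using step.IH e by (auto intro: rtrancl_into_rtrancl)
qed simp

lemma rtrancl_avoiding_into_copies:
  assumes "(u, v) \<in> (avoiding \<Gamma> (Pair i -` F))\<^sup>*" "i \<in> I"
  shows "((i, u), (i, v)) \<in> (avoiding (copies I \<Gamma>) F)\<^sup>*"
  using assms(1)
proof (induction rule: rtrancl_induct)
  case (step v w)
  then have "((i, v), (i, w)) \<in> avoiding (copies I \<Gamma>) F"
    using assms(2) by (auto simp: avoiding_def copies_iff)
  with step.IH show ?case by (rule rtrancl_into_rtrancl)
qed simp

lemma reach_avoiding_copies_iff:
  assumes "i \<in> I"
  shows "reach_avoiding (copies I \<Gamma>) F (i, u) (j, v) \<longleftrightarrow>
    i = j \<and> reach_avoiding \<Gamma> (Pair i -` F) u v"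
proof
  assume "reach_avoiding (copies I \<Gamma>) F (i, u) (j, v)"
  then have "(i, u) \<notin> F" "((i, u), (j, v)) \<in> (avoiding (copies I \<Gamma>) F)\<^sup>*"
    unfolding reach_avoiding_def by auto
  with rtrancl_avoiding_copies[OF this(2)] show "i = j \<and> reach_avoiding \<Gamma> (Pair i -` F) u v"
    unfolding reach_avoiding_def by auto
next
  assume "i = j \<and> reach_avoiding \<Gamma> (Pair i -` F) u v"
  then show "reach_avoiding (copies I \<Gamma>) F (i, u) (j, v)"
    using rtrancl_avoiding_into_copies[OF _ assms] unfolding reach_avoiding_def by auto
qed

lemma linked_copies_iff:
  fixes I :: "'i set" and \<Gamma> :: "'v rel"
  assumes "i \<in> I"
  shows "linked (copies I \<Gamma>) (Pair i ` X) (Pair j ` Y) \<longleftrightarrow> i = j \<and> linked \<Gamma> X Y"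
proof -
  have linked_iff: "linked (copies I \<Gamma>) (Pair i ` X) (Pair j ` Y) \<longleftrightarrow>
      (\<forall>F. finite F \<longrightarrow> (\<exists>x\<in>X. \<exists>y\<in>Y. i = j \<and> reach_avoiding \<Gamma> (Pair i -` F) x y))"
    unfolding linked_def by (auto simp: reach_avoiding_copies_iff[OF assms])
  have vimage_image: "Pair i -` Pair i ` G = G" for G :: "'v set" by auto
  have finite_vimage: "finite (Pair i -` F)" if "finite F" for F :: "('i \<times> 'v) set"
    using that by (rule finite_vimageI) (simp add: inj_on_def)
  show ?thesis
  proof
    assume l: "linked (copies I \<Gamma>) (Pair i ` X) (Pair j ` Y)"
    have "i = j" using l[unfolded linked_iff, rule_format, OF finite.emptyI] by blast
    moreover have "linked \<Gamma> X Y" unfolding linked_def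
    proof (intro allI impI)
      fix G :: "'v set" assume "finite G"
      then have "finite (Pair i ` G)" by simp
      from l[unfolded linked_iff, rule_format, OF this]
      obtain x y where "x \<in> X" "y \<in> Y" "reach_avoiding \<Gamma> (Pair i -` Pair i ` G) x y" by blast
      then show "\<exists>x\<in>X. \<exists>y\<in>Y. reach_avoiding \<Gamma> G x y" unfolding vimage_image by blast
    qed
    ultimately show "i = j \<and> linked \<Gamma> X Y" ..
  next
    assume ij: "i = j \<and> linked \<Gamma> X Y"
    show "linked (copies I \<Gamma>) (Pair i ` X) (Pair j ` Y)" unfolding linked_iff
    proof (intro allI impI)
      fix F :: "('i \<times> 'v) set" assume "finite F"
      from ij have "linked \<Gamma> X Y" ..
      from this[unfolded linked_def, rule_format, OF finite_vimage[OF \<open>finite F\<close>]]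
      obtain x y where "x \<in> X" "y \<in> Y" "reach_avoiding \<Gamma> (Pair i -` F) x y" by blast
      with ij show "\<exists>x\<in>X. \<exists>y\<in>Y. i = j \<and> reach_avoiding \<Gamma> (Pair i -` F) x y" by blast
    qed
  qed
qed

lemma rays_antirays_copies_iff:
  "\<rho> \<in> rays_antirays (copies I \<Gamma>) \<longleftrightarrow>
    (\<exists>i\<in>I. \<exists>r\<in>rays_antirays \<Gamma>. \<rho> = (\<lambda>n. (i, r n)))"
proof
  assume \<rho>: "\<rho> \<in> rays_antirays (copies I \<Gamma>)"
  have step: "fst (\<rho> (Suc n)) = fst (\<rho> n) \<and> fst (\<rho> n) \<in> I \<and>
      ((snd (\<rho> n), snd (\<rho> (Suc n))) \<in> \<Gamma> \<or> (snd (\<rho> (Suc n)), snd (\<rho> n)) \<in> \<Gamma>)" for n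
  proof -
    obtain i u j v where "\<rho> n = (i, u)" "\<rho> (Suc n) = (j, v)" by fastforce
    with rays_antirays_step[OF \<rho>, of n] show ?thesis by (simp add: copies_iff) blast
  qed
  have const: "fst (\<rho> n) = fst (\<rho> 0)" for n by (induction n) (simp_all add: step)
  define i r where "i = fst (\<rho> 0)" and "r = snd \<circ> \<rho>"
  have \<rho>_eq: "\<rho> = (\<lambda>n. (i, r n))" using const by (auto simp: i_def r_def prod_eq_iff)
  have i: "i \<in> I" using step[of 0] by (simp add: i_def)
  have edge: "(\<rho> m, \<rho> n) \<in> copies I \<Gamma> \<longleftrightarrow> (r m, r n) \<in> \<Gamma>" for m n
    using i by (simp add: \<rho>_eq copies_iff)
  have "(\<forall>k. (\<rho> k, \<rho> (Suc k)) \<in> copies I \<Gamma>) \<or> (\<forall>k. (\<rho> (Suc k), \<rho> k) \<in> copies I \<Gamma>)"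
    using \<rho> unfolding rays_antirays_def is_ray_def is_antiray_def by blast
  moreover have "inj r" using rays_antirays_inj[OF \<rho>] by (simp add: \<rho>_eq inj_def)
  ultimately have "r \<in> rays_antirays \<Gamma>"
    unfolding rays_antirays_def is_ray_def is_antiray_def edge by blast
  with i \<rho>_eq show "\<exists>i\<in>I. \<exists>r\<in>rays_antirays \<Gamma>. \<rho> = (\<lambda>n. (i, r n))" by blast
next
  assume "\<exists>i\<in>I. \<exists>r\<in>rays_antirays \<Gamma>. \<rho> = (\<lambda>n. (i, r n))"
  then obtain i r where "i \<in> I" "r \<in> rays_antirays \<Gamma>" "\<rho> = (\<lambda>n. (i, r n))" by blast
  moreover have "inj (\<lambda>n. (i, r n))"
    using rays_antirays_inj[OF \<open>r \<in> rays_antirays \<Gamma>\<close>] by (simp add: inj_def)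
  ultimately show "\<rho> \<in> rays_antirays (copies I \<Gamma>)"
    unfolding rays_antirays_def is_ray_def is_antiray_def by (auto simp: copies_iff)
qed

lemma equiv_Times_index:
  assumes "equiv A r"
  shows "equiv (I \<times> A) {((i, x), (j, y)). i = j \<and> i \<in> I \<and> (x, y) \<in> r}"
proof -
  from assms have r: "r \<subseteq> A \<times> A" "refl_on A r" "sym r" "trans r" by (blast elim: equivE)+
  show ?thesis
  proof (rule equivI)
    show "sym {((i, x), (j, y)). i = j \<and> i \<in> I \<and> (x, y) \<in> r}"
      by (rule symI) (auto intro: symD[OF r(3)])
    show "trans {((i, x), (j, y)). i = j \<and> i \<in> I \<and> (x, y) \<in> r}"
      by (rule transI) (auto intro: transD[OF r(4)])
  qed (use r in \<open>auto simp: refl_on_def\<close>)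
qed

lemma quotient_Times_index_eqpoll:
  fixes I :: "'i set" and A :: "'a set"
  assumes eq: "equiv A r"
  shows "(I \<times> A) // {((i, x), (j, y)). i = j \<and> i \<in> I \<and> (x, y) \<in> r} \<approx> I \<times> (A // r)"
proof -
  let ?s = "{((i, x), (j, y)). i = j \<and> i \<in> I \<and> (x, y) \<in> r}"
  have index_class: "?s `` {(i, x)} = {i} \<times> r `` {x}" if "i \<in> I" for i x using that by auto
  have nonempty: "X \<noteq> {}" if "X \<in> A // r" for X
    using that equiv_class_self[OF eq] by (metis empty_iff quotientE)
  define g where "g p = {fst p} \<times> snd p" for p :: "'i \<times> 'a set"
  have "bij_betw g (I \<times> (A // r)) ((I \<times> A) // ?s)"
  proof (rule bij_betw_imageI)
    show "inj_on g (I \<times> (A // r))"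
    proof (rule inj_onI)
      fix p q assume p: "p \<in> I \<times> (A // r)" and q: "q \<in> I \<times> (A // r)" and e: "g p = g q"
      have "snd p \<noteq> {}" "snd q \<noteq> {}" using nonempty p q by auto
      then show "p = q" using e unfolding g_def by (simp add: times_eq_iff prod_eq_iff)
    qed
  next
    show "g ` (I \<times> (A // r)) = (I \<times> A) // ?s"
    proof
      show "g ` (I \<times> (A // r)) \<subseteq> (I \<times> A) // ?s"
      proof
        fix Z assume "Z \<in> g ` (I \<times> (A // r))"
        then obtain i X where iX: "i \<in> I" "X \<in> A // r" "Z = {i} \<times> X" unfolding g_def by auto
        then obtain x where x: "x \<in> A" "X = r `` {x}" by (meson quotientE)
        then have "Z = ?s `` {(i, x)}" using index_class[OF iX(1)] iX(3) by simp
        moreover have "(i, x) \<in> I \<times> A" using iX(1) x(1) by simp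
        then have "?s `` {(i, x)} \<in> (I \<times> A) // ?s" by (rule quotientI)
        ultimately show "Z \<in> (I \<times> A) // ?s" by simp
      qed
    next
      show "(I \<times> A) // ?s \<subseteq> g ` (I \<times> (A // r))"
      proof
        fix Z assume "Z \<in> (I \<times> A) // ?s"
        then obtain p where p: "p \<in> I \<times> A" "Z = ?s `` {p}" by (rule quotientE)
        then obtain i x where ix: "p = (i, x)" "i \<in> I" "x \<in> A" by blast
        then have "Z = g (i, r `` {x})" using index_class[OF ix(2)] p(2) unfolding g_def by simp
        moreover have "(i, r `` {x}) \<in> I \<times> (A // r)" using ix by (auto intro: quotientI)
        ultimately show "Z \<in> g ` (I \<times> (A // r))" by blast
      qed
    qed
  qed
  then show ?thesis using eqpoll_sym unfolding eqpoll_def by blast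
qed

lemma end_equiv_copies_iff:
  fixes I :: "'i set" and \<Gamma> :: "'v rel"
  assumes tame: "tame \<Gamma> K" and i: "i \<in> I" and j: "j \<in> I"
    and r: "r \<in> rays_antirays \<Gamma>" and s: "s \<in> rays_antirays \<Gamma>"
  shows "((\<lambda>n. (i, r n)), (\<lambda>n. (j, s n))) \<in> end_equiv (copies I \<Gamma>) \<longleftrightarrow>
    i = j \<and> (r, s) \<in> end_equiv \<Gamma>"
proof -
  have range_lift: "range (\<lambda>n. (k, q n)) = Pair k ` range q" for k :: 'i and q :: "nat \<Rightarrow> 'v"
    by auto
  have "(\<lambda>n. (i, r n)) \<in> rays_antirays (copies I \<Gamma>)" "(\<lambda>n. (j, s n)) \<in> rays_antirays (copies I \<Gamma>)"
    using i j r s unfolding rays_antirays_copies_iff by blast+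
  then have "((\<lambda>n. (i, r n)), (\<lambda>n. (j, s n))) \<in> end_equiv (copies I \<Gamma>) \<longleftrightarrow>
      linked (copies I \<Gamma>) (Pair i ` range r) (Pair j ` range s)"
    by (simp add: end_equiv_tame_iff[OF tame_copies[OF tame]] range_lift)
  also have "\<dots> \<longleftrightarrow> i = j \<and> linked \<Gamma> (range r) (range s)" by (rule linked_copies_iff[OF i])
  also have "\<dots> \<longleftrightarrow> i = j \<and> (r, s) \<in> end_equiv \<Gamma>" using r s by (simp add: end_equiv_tame_iff[OF tame])
  finally show ?thesis .
qed

theorem ends_copies:
  fixes I :: "'i set" and \<Gamma> :: "'v rel"
  assumes tame: "tame \<Gamma> K"
  shows "ends (copies I \<Gamma>) \<approx> I \<times> ends \<Gamma>"
proof -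
  let ?A = "rays_antirays (copies I \<Gamma>)" and ?B = "I \<times> rays_antirays \<Gamma>"
  let ?s = "{((i, x), (j, y)). i = j \<and> i \<in> I \<and> (x, y) \<in> end_equiv \<Gamma>}"
  define f where "f \<rho> = (fst (\<rho> 0), snd \<circ> \<rho>)" for \<rho> :: "nat \<Rightarrow> 'i \<times> 'v"
  have f_lift: "f (\<lambda>n. (i, r n)) = (i, r)" for i r by (simp add: f_def comp_def)
  have "\<forall>\<rho>\<in>?A. f \<rho> \<in> ?B"
  proof
    fix \<rho> assume "\<rho> \<in> ?A"
    then obtain i r where "i \<in> I" "r \<in> rays_antirays \<Gamma>" "\<rho> = (\<lambda>n. (i, r n))"
      unfolding rays_antirays_copies_iff by blast
    then show "f \<rho> \<in> ?B" using f_lift by simp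
  qed
  moreover have "\<forall>\<rho>\<in>?A. \<forall>\<sigma>\<in>?A. (\<rho>, \<sigma>) \<in> end_equiv (copies I \<Gamma>) \<longleftrightarrow> (f \<rho>, f \<sigma>) \<in> ?s"
  proof (intro ballI)
    fix \<rho> \<sigma> assume \<rho>\<sigma>: "\<rho> \<in> ?A" "\<sigma> \<in> ?A"
    obtain i r j s where ir: "i \<in> I" "r \<in> rays_antirays \<Gamma>" "\<rho> = (\<lambda>n. (i, r n))"
      and js: "j \<in> I" "s \<in> rays_antirays \<Gamma>" "\<sigma> = (\<lambda>n. (j, s n))"
      using \<rho>\<sigma> unfolding rays_antirays_copies_iff by blast
    then show "(\<rho>, \<sigma>) \<in> end_equiv (copies I \<Gamma>) \<longleftrightarrow> (f \<rho>, f \<sigma>) \<in> ?s"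
      using end_equiv_copies_iff[OF tame ir(1) js(1) ir(2) js(2)] by (simp add: f_lift)
  qed
  moreover have "\<forall>p\<in>?B. \<exists>\<rho>\<in>?A. (f \<rho>, p) \<in> ?s"
  proof
    fix p assume p: "p \<in> ?B"
    obtain i r where ir: "p = (i, r)" "i \<in> I" "r \<in> rays_antirays \<Gamma>" using p by blast
    then have "(\<lambda>n. (i, r n)) \<in> ?A" unfolding rays_antirays_copies_iff by blast
    moreover have "(r, r) \<in> end_equiv \<Gamma>"
      using ir(3) equiv_end_equiv[OF tame] unfolding equiv_def refl_on_def by blast
    ultimately show "\<exists>\<rho>\<in>?A. (f \<rho>, p) \<in> ?s"
      using ir(1,2) by (intro bexI[of _ "\<lambda>n. (i, r n)"]) (simp_all add: f_lift)
  qed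
  ultimately have "?A // end_equiv (copies I \<Gamma>) \<approx> ?B // ?s"
    by (rule eqpoll_quotients[OF equiv_end_equiv[OF tame_copies[OF tame]]
        equiv_Times_index[OF equiv_end_equiv[OF tame]]])
  also have "?B // ?s \<approx> I \<times> (rays_antirays \<Gamma> // end_equiv \<Gamma>)"
    by (rule quotient_Times_index_eqpoll[OF equiv_end_equiv[OF tame]])
  finally show ?thesis unfolding ends_def .
qed

section \<open>Cayley graphs of finitely generated semigroups\<close>

definition semigroup_on :: "'a set \<Rightarrow> ('a \<Rightarrow> 'a \<Rightarrow> 'a) \<Rightarrow> bool" where
  "semigroup_on S mul \<longleftrightarrow> (\<forall>x\<in>S. \<forall>y\<in>S. mul x y \<in> S) \<and>
     (\<forall>x\<in>S. \<forall>y\<in>S. \<forall>z\<in>S. mul (mul x y) z = mul x (mul y z))"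

lemma semigroup_on_flip: "semigroup_on S mul \<Longrightarrow> semigroup_on S (\<lambda>x y. mul y x)"
  unfolding semigroup_on_def by simp

lemma sg_generated_flip: "sg_generated (\<lambda>x y. mul y x) A = sg_generated mul A"
proof (intro equalityI subsetI)
  fix x assume "x \<in> sg_generated (\<lambda>x y. mul y x) A"
  then show "x \<in> sg_generated mul A"
    by induction (auto intro: sg_generated.intros)
next
  fix x assume "x \<in> sg_generated mul A"
  then show "x \<in> sg_generated (\<lambda>x y. mul y x) A"
  proof induction
    case (mul_closed x y)
    then have "(\<lambda>x y. mul y x) y x \<in> sg_generated (\<lambda>x y. mul y x) A"
      by (intro sg_generated.mul_closed)
    then show ?case by simp
  qed (rule sg_generated.gen)
qed

lemma sg_generates_flip: "sg_generates S (\<lambda>x y. mul y x) A \<longleftrightarrow> sg_generates S mul A"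
  using sg_generated_flip[of mul A] unfolding sg_generates_def by simp

lemma left_cayley_eq_right_cayley_flip: "left_cayley S mul A = right_cayley S (\<lambda>x y. mul y x) A"
  by (simp add: left_cayley_def right_cayley_def)

lemma right_cayley_subset:
  "semigroup_on S mul \<Longrightarrow> A \<subseteq> S \<Longrightarrow> right_cayley S mul A \<subseteq> S \<times> S"
  unfolding right_cayley_def semigroup_on_def by auto

lemma finite_right_cayley_Image: "finite A \<Longrightarrow> finite (right_cayley S mul A `` {x})"
proof -
  assume "finite A"
  moreover have "right_cayley S mul A `` {x} \<subseteq> mul x ` A" unfolding right_cayley_def by auto
  ultimately show ?thesis using finite_surj by blast
qed

text \<open>Right multiplication by a fixed element is a bounded move in the right Cayley graph:
  write the element as a product of generators.\<close>

lemma right_cayley_relpow_mult: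
  assumes sg: "semigroup_on S mul" and gen: "sg_generates S mul A" and c: "c \<in> S"
  shows "\<exists>n. \<forall>x\<in>S. (x, mul x c) \<in> right_cayley S mul A ^^ n"
proof -
  have eq: "sg_generated mul A = S" using gen unfolding sg_generates_def by blast
  have "c \<in> sg_generated mul A" using c eq by simp
  then show ?thesis
  proof (induction rule: sg_generated.induct)
    case (gen a)
    then have "(x, mul x a) \<in> right_cayley S mul A ^^ 1" if "x \<in> S" for x
      using that unfolding right_cayley_def by auto
    then show ?case by blast
  next
    case (mul_closed y z)
    then obtain m n where m: "\<forall>x\<in>S. (x, mul x y) \<in> right_cayley S mul A ^^ m"
      and n: "\<forall>x\<in>S. (x, mul x z) \<in> right_cayley S mul A ^^ n" by blast
    have yz: "y \<in> S" "z \<in> S" using mul_closed(1,2) eq by auto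
    have "(x, mul x (mul y z)) \<in> right_cayley S mul A ^^ (m + n)" if x: "x \<in> S" for x
    proof -
      have xy: "mul x y \<in> S" "mul (mul x y) z = mul x (mul y z)"
        using sg x yz unfolding semigroup_on_def by blast+
      have "(x, mul x y) \<in> right_cayley S mul A ^^ m" using m x by blast
      moreover have "(mul x y, mul (mul x y) z) \<in> right_cayley S mul A ^^ n" using n xy(1) by blast
      ultimately show ?thesis unfolding xy(2) by (rule relpow_trans)
    qed
    then show ?case by blast
  qed
qed

lemma right_cayley_near_mult:
  assumes sg: "semigroup_on S mul" and gen: "sg_generates S mul A"
    and fin: "finite Cs" and sub: "Cs \<subseteq> S"
  shows "\<exists>N. \<forall>c\<in>Cs. \<forall>x\<in>S. near (right_cayley S mul A) N x (mul x c)"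
proof -
  have "\<forall>c\<in>Cs. \<exists>n. \<forall>x\<in>S. (x, mul x c) \<in> right_cayley S mul A ^^ n"
    using right_cayley_relpow_mult[OF sg gen] sub by blast
  from bchoice[OF this]
  obtain n where n: "\<forall>c\<in>Cs. \<forall>x\<in>S. (x, mul x c) \<in> right_cayley S mul A ^^ n c" by blast
  have "near (right_cayley S mul A) (Max (n ` Cs)) x (mul x c)" if "c \<in> Cs" "x \<in> S" for c x
  proof -
    have "n c \<le> Max (n ` Cs)" using fin that(1) by simp
    then show ?thesis unfolding near_def using n that by blast
  qed
  then show ?thesis by blast
qed

lemma tame_right_cayley_group:
  fixes G (structure)
  assumes "group G" "finite B" "sg_generates (carrier G) (\<otimes>\<^bsub>G\<^esub>) B"
  obtains K where "tame (right_cayley (carrier G) (\<otimes>\<^bsub>G\<^esub>) B) K"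
proof -
  interpret group G by fact
  let ?\<Gamma> = "right_cayley (carrier G) (\<otimes>) B"
  have sg: "semigroup_on (carrier G) (\<otimes>)" unfolding semigroup_on_def by (simp add: m_assoc)
  have B: "B \<subseteq> carrier G" using assms(3) unfolding sg_generates_def by blast
  have edge: "\<exists>b\<in>B. u \<in> carrier G \<and> v = u \<otimes> b" if uv: "(u, v) \<in> ?\<Gamma>" for u v
    using uv unfolding right_cayley_def by blast
  have "finite ((\<lambda>b. inv b) ` B)" "(\<lambda>b. inv b) ` B \<subseteq> carrier G" using assms(2) B by auto
  from right_cayley_near_mult[OF sg assms(3) this]
  obtain N where N: "\<forall>c\<in>(\<lambda>b. inv b) ` B. \<forall>x\<in>carrier G. near ?\<Gamma> N x (x \<otimes> c)" ..
  have "?\<Gamma>\<inverse> `` {v} \<subseteq> (\<lambda>b. v \<otimes> inv b) ` B" for v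
  proof
    fix u assume "u \<in> ?\<Gamma>\<inverse> `` {v}"
    then have "(u, v) \<in> ?\<Gamma>" by simp
    then obtain b where b: "b \<in> B" "u \<in> carrier G" "v = u \<otimes> b" using edge by blast
    then have "u = v \<otimes> inv b" using B by (auto simp: m_assoc)
    then show "u \<in> (\<lambda>b. v \<otimes> inv b) ` B" using b(1) by auto
  qed
  then have "finite (?\<Gamma>\<inverse> `` {v})" for v by (rule finite_surj[OF assms(2)])
  moreover have "near ?\<Gamma> N v u" if uv: "(u, v) \<in> ?\<Gamma>" for u v
  proof -
    obtain b where b: "b \<in> B" "u \<in> carrier G" "v = u \<otimes> b" using edge[OF uv] by blast
    have "v \<in> carrier G" "inv b \<in> (\<lambda>b. inv b) ` B" using b B by auto
    then have "near ?\<Gamma> N v (v \<otimes> inv b)" using N by blast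
    moreover have "v \<otimes> inv b = u" using b B by (auto simp: m_assoc)
    ultimately show ?thesis by simp
  qed
  ultimately have "tame ?\<Gamma> N"
    unfolding tame_def using finite_right_cayley_Image[OF assms(2)] by blast
  then show ?thesis using that by blast
qed

text \<open>Just enough algebra to make \<open>\<phi>\<close> and \<open>\<psi>\<close> a coarse equivalence between the right
  Cayley graph of \<open>S\<close> and \<open>J\<close> copies of the Cayley graph of \<open>G\<close>.\<close>

locale cayley_copies_of_group = group G for G :: "('g, 'b) monoid_scheme" (structure) +
  fixes S :: "'a set" and mul :: "'a \<Rightarrow> 'a \<Rightarrow> 'a" and A :: "'a set"
    and B :: "'g set" and J :: "'j set"
    and \<phi> :: "'a \<Rightarrow> 'j \<times> 'g" and \<psi> :: "'j \<times> 'g \<Rightarrow> 'a"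
    and Cs :: "'g set" and Ds :: "'a set" and Es :: "'a set"
  assumes semigroup: "semigroup_on S mul" and finite_A: "finite A" and gen_A: "sg_generates S mul A"
    and finite_B: "finite B" and gen_B: "sg_generates (carrier G) (\<otimes>) B"
    and \<phi>_into: "\<And>x. x \<in> S \<Longrightarrow> \<phi> x \<in> J \<times> carrier G"
    and \<psi>_into: "\<And>y. y \<in> J \<times> carrier G \<Longrightarrow> \<psi> y \<in> S"
    and \<phi>_\<psi>: "\<And>y. y \<in> J \<times> carrier G \<Longrightarrow> \<phi> (\<psi> y) = y"
    and finite_fibres: "\<And>w. finite {x\<in>S. \<phi> x = w}"
    and Cs: "finite Cs" "Cs \<subseteq> carrier G" and Ds: "finite Ds" "Ds \<subseteq> S"
    and Es: "finite Es" "Es \<subseteq> S"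
    and \<phi>_mult: "\<And>x a. x \<in> S \<Longrightarrow> a \<in> A \<Longrightarrow> \<exists>c\<in>Cs. \<phi> (mul x a) = (fst (\<phi> x), snd (\<phi> x) \<otimes> c)"
    and \<psi>_mult: "\<And>j g b. j \<in> J \<Longrightarrow> g \<in> carrier G \<Longrightarrow> b \<in> B \<Longrightarrow>
      \<exists>d\<in>Ds. \<psi> (j, g \<otimes> b) = mul (\<psi> (j, g)) d"
    and to_retract: "\<And>x. x \<in> S \<Longrightarrow> \<exists>e\<in>Es. \<psi> (\<phi> x) = mul x e"
    and from_retract: "\<And>x. x \<in> S \<Longrightarrow> \<exists>e\<in>Es. x = mul (\<psi> (\<phi> x)) e"
begin

abbreviation (input) "\<Gamma>S \<equiv> right_cayley S mul A"
abbreviation (input) "\<Gamma>G \<equiv> right_cayley (carrier G) (\<otimes>) B"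

lemma semigroup_G: "semigroup_on (carrier G) (\<otimes>)"
  unfolding semigroup_on_def by (simp add: m_assoc)

lemma coarse_map_\<phi>: "\<exists>C. coarse_map S \<Gamma>S (copies J \<Gamma>G) C \<phi>"
proof -
  obtain N where N: "\<forall>c\<in>Cs. \<forall>g\<in>carrier G. near \<Gamma>G N g (g \<otimes> c)"
    using right_cayley_near_mult[OF semigroup_G gen_B Cs] by blast
  have "near (copies J \<Gamma>G) N (\<phi> x) (\<phi> y)" if xy: "(x, y) \<in> \<Gamma>S" for x y
  proof -
    obtain a where a: "x \<in> S" "a \<in> A" "y = mul x a" using xy unfolding right_cayley_def by blast
    then obtain c where c: "c \<in> Cs" "\<phi> y = (fst (\<phi> x), snd (\<phi> x) \<otimes> c)" using \<phi>_mult by blast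
    have "fst (\<phi> x) \<in> J" "snd (\<phi> x) \<in> carrier G" using \<phi>_into[OF a(1)] by auto
    then have "near (copies J \<Gamma>G) N (fst (\<phi> x), snd (\<phi> x)) (fst (\<phi> x), snd (\<phi> x) \<otimes> c)"
      using N c(1) by (blast intro: near_copies)
    then show ?thesis using c(2) by simp
  qed
  moreover have "\<Gamma>S \<subseteq> S \<times> S"
    using right_cayley_subset[OF semigroup] gen_A unfolding sg_generates_def by blast
  ultimately have "coarse_map S \<Gamma>S (copies J \<Gamma>G) N \<phi>"
    using finite_fibres unfolding coarse_map_def by blast
  then show ?thesis ..
qed

lemma coarse_map_\<psi>: "\<exists>C. coarse_map (J \<times> carrier G) (copies J \<Gamma>G) \<Gamma>S C \<psi>"
proof -
  obtain N where N: "\<forall>d\<in>Ds. \<forall>x\<in>S. near \<Gamma>S N x (mul x d)"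
    using right_cayley_near_mult[OF semigroup gen_A Ds] by blast
  have edge: "\<exists>j g b. y = (j, g) \<and> y' = (j, g \<otimes> b) \<and> j \<in> J \<and> g \<in> carrier G \<and> b \<in> B"
    if "(y, y') \<in> copies J \<Gamma>G" for y y'
    using that unfolding copies_def right_cayley_def by blast
  have "near \<Gamma>S N (\<psi> y) (\<psi> y')" if yy': "(y, y') \<in> copies J \<Gamma>G" for y y'
  proof -
    obtain j g b where e: "y = (j, g)" "y' = (j, g \<otimes> b)" "j \<in> J" "g \<in> carrier G" "b \<in> B"
      using edge[OF yy'] by blast
    then obtain d where "d \<in> Ds" "\<psi> y' = mul (\<psi> y) d" using \<psi>_mult by blast
    moreover have "\<psi> y \<in> S" using e \<psi>_into by simp
    ultimately show ?thesis using N by simp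
  qed
  moreover have "copies J \<Gamma>G \<subseteq> (J \<times> carrier G) \<times> (J \<times> carrier G)"
    using edge gen_B unfolding sg_generates_def by fastforce
  moreover have "finite {y\<in>J \<times> carrier G. \<psi> y = w}" for w
  proof -
    have "{y\<in>J \<times> carrier G. \<psi> y = w} \<subseteq> {\<phi> w}" using \<phi>_\<psi> by auto
    then show ?thesis by (rule finite_subset) simp
  qed
  ultimately have "coarse_map (J \<times> carrier G) (copies J \<Gamma>G) \<Gamma>S N \<psi>"
    unfolding coarse_map_def by blast
  then show ?thesis ..
qed

lemma near_retract: "\<exists>C. \<forall>x\<in>S. near \<Gamma>S C x (\<psi> (\<phi> x)) \<and> near \<Gamma>S C (\<psi> (\<phi> x)) x"
proof -
  obtain N where N: "\<forall>e\<in>Es. \<forall>x\<in>S. near \<Gamma>S N x (mul x e)"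
    using right_cayley_near_mult[OF semigroup gen_A Es] by blast
  have "near \<Gamma>S N x (\<psi> (\<phi> x)) \<and> near \<Gamma>S N (\<psi> (\<phi> x)) x" if "x \<in> S" for x
  proof -
    have "\<psi> (\<phi> x) \<in> S" using that \<phi>_into \<psi>_into by blast
    then show ?thesis using to_retract[OF that] from_retract[OF that] N that by metis
  qed
  then show ?thesis by blast
qed

theorem ends_antichain_and_eqpoll: "ends_antichain \<Gamma>S \<and> ends \<Gamma>S \<approx> J \<times> ends \<Gamma>G"
proof -
  obtain K where tame_G: "tame \<Gamma>G K"
    using tame_right_cayley_group[OF is_group finite_B gen_B] by blast
  then have tame_J: "tame (copies J \<Gamma>G) K" by (rule tame_copies)
  obtain C1 C2 C3 where c1: "coarse_map S \<Gamma>S (copies J \<Gamma>G) C1 \<phi>"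
    and c2: "coarse_map (J \<times> carrier G) (copies J \<Gamma>G) \<Gamma>S C2 \<psi>"
    and c3: "\<forall>x\<in>S. near \<Gamma>S C3 x (\<psi> (\<phi> x)) \<and> near \<Gamma>S C3 (\<psi> (\<phi> x)) x"
    using coarse_map_\<phi> coarse_map_\<psi> near_retract by blast
  define C where "C = C1 + C2 + C3"
  have \<phi>: "coarse_map S \<Gamma>S (copies J \<Gamma>G) C \<phi>" using coarse_map_mono[OF c1] by (simp add: C_def)
  have \<psi>: "coarse_map (J \<times> carrier G) (copies J \<Gamma>G) \<Gamma>S C \<psi>"
    using coarse_map_mono[OF c2] by (simp add: C_def)
  have retract: "near \<Gamma>S C x (\<psi> (\<phi> x))" "near \<Gamma>S C (\<psi> (\<phi> x)) x" if "x \<in> S" for x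
    using c3 that near_mono[of \<Gamma>S C3 _ _ C] by (simp_all add: C_def)
  have "tame \<Gamma>S (C + C * (K * C) + C)"
    using tame_if_coarse_retract[OF tame_J \<phi> \<psi> _ retract] finite_right_cayley_Image[OF finite_A]
    by blast
  moreover have "coarse_equivalence S \<Gamma>S (C + C * (K * C) + C) (J \<times> carrier G) (copies J \<Gamma>G) K C \<phi> \<psi>"
  proof (unfold_locales)
    show "\<phi> ` S \<subseteq> J \<times> carrier G" "\<psi> ` (J \<times> carrier G) \<subseteq> S" using \<phi>_into \<psi>_into by blast+
    show "near (copies J \<Gamma>G) C y (\<phi> (\<psi> y))" if "y \<in> J \<times> carrier G" for y
      using \<phi>_\<psi>[OF that] near_refl by metis
  qed (use calculation tame_J \<phi> \<psi> retract(1) in auto)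
  ultimately show ?thesis
    using coarse_equivalence.ends_eqpoll ends_copies[OF tame_G] eqpoll_trans ends_antichain_if_tame
    by metis
qed

end

section \<open>Rees matrix semigroups over a group\<close>

lemma (in group) mult_inv_cancel_left [simp]:
  "x \<in> carrier G \<Longrightarrow> y \<in> carrier G \<Longrightarrow> x \<otimes> (inv x \<otimes> y) = y"
  by (simp add: m_assoc[symmetric])

lemma (in group) inv_mult_cancel_left [simp]:
  "x \<in> carrier G \<Longrightarrow> y \<in> carrier G \<Longrightarrow> inv x \<otimes> (x \<otimes> y) = y"
  by (simp add: m_assoc[symmetric])

locale rees_matrix_semigroup = group G for G :: "('g, 'b) monoid_scheme" (structure) +
  fixes I :: "'i set" and L :: "'l set" and P :: "'l \<Rightarrow> 'i \<Rightarrow> 'g"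
  assumes finite_I: "finite I" and I_nonempty: "I \<noteq> {}"
    and finite_L: "finite L" and L_nonempty: "L \<noteq> {}"
    and P_closed: "\<And>l i. l \<in> L \<Longrightarrow> i \<in> I \<Longrightarrow> P l i \<in> carrier G"
begin

abbreviation (input) "S \<equiv> rees_carrier G I L"

lemma rees_mult_simp [simp]: "rees_mult G P (i, g, l) (j, h, m) = (i, g \<otimes> P l j \<otimes> h, m)"
  by (simp add: rees_mult_def)

lemma mem_rees_carrier [simp]: "(i, g, l) \<in> S \<longleftrightarrow> i \<in> I \<and> g \<in> carrier G \<and> l \<in> L"
  by (simp add: rees_carrier_def)

lemma semigroup_on_rees: "semigroup_on S (rees_mult G P)"
  unfolding semigroup_on_def rees_carrier_def by (auto simp: P_closed m_assoc)

lemma cayley_copies_right: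
  assumes "finite A" "sg_generates S (rees_mult G P) A"
    and "finite B" "sg_generates (carrier G) (\<otimes>) B"
    and i0: "i0 \<in> I" and l0: "l0 \<in> L"
  shows "cayley_copies_of_group G S (rees_mult G P) A B I
    (\<lambda>(i, g, l). (i, g)) (\<lambda>(i, g). (i, g, l0))
    ((\<lambda>(l, j, h, m). P l j \<otimes> h) ` (L \<times> A))
    ((\<lambda>b. (i0, inv (P l0 i0) \<otimes> b, l0)) ` B)
    ((\<lambda>l. (i0, inv (P l i0), l0)) ` L \<union> (\<lambda>l. (i0, inv (P l0 i0), l)) ` L)"
proof -
  have A: "A \<subseteq> S" and B: "B \<subseteq> carrier G" using assms(2,4) unfolding sg_generates_def by blast+
  show ?thesis
  proof (unfold_locales)
    show "finite {x\<in>S. (case x of (i, g, l) \<Rightarrow> (i, g)) = w}" for w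
    proof -
      have "{x\<in>S. (case x of (i, g, l) \<Rightarrow> (i, g)) = w} \<subseteq> (\<lambda>l. (fst w, snd w, l)) ` L"
        by (auto simp: rees_carrier_def)
      then show ?thesis by (rule finite_surj[OF finite_L])
    qed
    show "(\<lambda>(l, j, h, m). P l j \<otimes> h) ` (L \<times> A) \<subseteq> carrier G"
      using A P_closed by (auto simp: rees_carrier_def)
    show "\<exists>c\<in>(\<lambda>(l, j, h, m). P l j \<otimes> h) ` (L \<times> A).
        (case rees_mult G P x a of (i, g, l) \<Rightarrow> (i, g)) =
        (fst (case x of (i, g, l) \<Rightarrow> (i, g)), snd (case x of (i, g, l) \<Rightarrow> (i, g)) \<otimes> c)"
      if "x \<in> S" "a \<in> A" for x a
      using that A P_closed by (force simp: rees_carrier_def m_assoc)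
    show "\<exists>d\<in>(\<lambda>b. (i0, inv (P l0 i0) \<otimes> b, l0)) ` B.
        (case (j, g \<otimes> b) of (i, g) \<Rightarrow> (i, g, l0)) = rees_mult G P (case (j, g) of (i, g) \<Rightarrow> (i, g, l0)) d"
      if "g \<in> carrier G" "b \<in> B" for j g b
      using that B P_closed[OF l0 i0]
      by (intro bexI[of _ "(i0, inv (P l0 i0) \<otimes> b, l0)"]) (auto simp: m_assoc)
    show "\<exists>e\<in>(\<lambda>l. (i0, inv (P l i0), l0)) ` L \<union> (\<lambda>l. (i0, inv (P l0 i0), l)) ` L.
        (case (case x of (i, g, l) \<Rightarrow> (i, g)) of (i, g) \<Rightarrow> (i, g, l0)) = rees_mult G P x e"
      if "x \<in> S" for x
      using that i0 P_closed
      by (cases x, intro bexI[of _ "(i0, inv (P (snd (snd x)) i0), l0)"]) (auto simp: m_assoc)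
    show "\<exists>e\<in>(\<lambda>l. (i0, inv (P l i0), l0)) ` L \<union> (\<lambda>l. (i0, inv (P l0 i0), l)) ` L.
        x = rees_mult G P (case (case x of (i, g, l) \<Rightarrow> (i, g)) of (i, g) \<Rightarrow> (i, g, l0)) e"
      if "x \<in> S" for x
      using that i0 l0 P_closed
      by (cases x, intro bexI[of _ "(i0, inv (P l0 i0), snd (snd x))"]) (auto simp: m_assoc)
  qed (use assms i0 l0 B semigroup_on_rees P_closed finite_L in \<open>auto simp: rees_carrier_def\<close>)
qed

text \<open>Left ends are right ends for the opposite multiplication; now \<open>(i, g, \<lambda>)\<close> is sent
  to copy \<open>\<lambda>\<close> at \<open>g\<inverse>\<close>, since left multiplication acts on the group coordinate from the left.\<close>

lemma cayley_copies_left: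
  assumes "finite A" "sg_generates S (rees_mult G P) A"
    and "finite B" "sg_generates (carrier G) (\<otimes>) B"
    and i0: "i0 \<in> I" and l0: "l0 \<in> L"
  shows "cayley_copies_of_group G S (\<lambda>x y. rees_mult G P y x) A B L
    (\<lambda>(i, g, l). (l, inv g)) (\<lambda>(l, g). (i0, inv g, l))
    ((\<lambda>(i, j, h, m). inv (h \<otimes> P m i)) ` (I \<times> A))
    ((\<lambda>b. (i0, inv b \<otimes> inv (P l0 i0), l0)) ` B)
    ((\<lambda>i. (i0, inv (P l0 i), l0)) ` I \<union> (\<lambda>i. (i, inv (P l0 i0), l0)) ` I)"
proof -
  have A: "A \<subseteq> S" and B: "B \<subseteq> carrier G" using assms(2,4) unfolding sg_generates_def by blast+
  show ?thesis
  proof (unfold_locales)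
    show "semigroup_on S (\<lambda>x y. rees_mult G P y x)"
      using semigroup_on_rees by (rule semigroup_on_flip)
    show "sg_generates S (\<lambda>x y. rees_mult G P y x) A"
      using assms(2) sg_generates_flip[of S "rees_mult G P" A] by simp
    show "finite {x\<in>S. (case x of (i, g, l) \<Rightarrow> (l, inv g)) = w}" for w
    proof -
      have "{x\<in>S. (case x of (i, g, l) \<Rightarrow> (l, inv g)) = w} \<subseteq> (\<lambda>i. (i, inv (snd w), fst w)) ` I"
        by (auto simp: rees_carrier_def)
      then show ?thesis by (rule finite_surj[OF finite_I])
    qed
    show "(\<lambda>(i, j, h, m). inv (h \<otimes> P m i)) ` (I \<times> A) \<subseteq> carrier G"
      using A P_closed by (auto simp: rees_carrier_def)
    show "\<exists>c\<in>(\<lambda>(i, j, h, m). inv (h \<otimes> P m i)) ` (I \<times> A).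
        (case rees_mult G P a x of (i, g, l) \<Rightarrow> (l, inv g)) =
        (fst (case x of (i, g, l) \<Rightarrow> (l, inv g)), snd (case x of (i, g, l) \<Rightarrow> (l, inv g)) \<otimes> c)"
      if "x \<in> S" "a \<in> A" for x a
      using that A P_closed by (force simp: rees_carrier_def m_assoc inv_mult_group)
    show "\<exists>d\<in>(\<lambda>b. (i0, inv b \<otimes> inv (P l0 i0), l0)) ` B.
        (case (l, g \<otimes> b) of (l, g) \<Rightarrow> (i0, inv g, l)) =
        rees_mult G P d (case (l, g) of (l, g) \<Rightarrow> (i0, inv g, l))"
      if "g \<in> carrier G" "b \<in> B" for l g b
      using that B P_closed[OF l0 i0]
      by (intro bexI[of _ "(i0, inv b \<otimes> inv (P l0 i0), l0)"]) (auto simp: m_assoc inv_mult_group)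
    show "\<exists>e\<in>(\<lambda>i. (i0, inv (P l0 i), l0)) ` I \<union> (\<lambda>i. (i, inv (P l0 i0), l0)) ` I.
        (case (case x of (i, g, l) \<Rightarrow> (l, inv g)) of (l, g) \<Rightarrow> (i0, inv g, l)) = rees_mult G P e x"
      if "x \<in> S" for x
      using that l0 P_closed
      by (cases x, intro bexI[of _ "(i0, inv (P l0 (fst x)), l0)"]) (auto simp: m_assoc)
    show "\<exists>e\<in>(\<lambda>i. (i0, inv (P l0 i), l0)) ` I \<union> (\<lambda>i. (i, inv (P l0 i0), l0)) ` I.
        x = rees_mult G P e (case (case x of (i, g, l) \<Rightarrow> (l, inv g)) of (l, g) \<Rightarrow> (i0, inv g, l))"
      if "x \<in> S" for x
      using that i0 l0 P_closed
      by (cases x, intro bexI[of _ "(fst x, inv (P l0 i0), l0)"]) (auto simp: m_assoc)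
  qed (use assms i0 l0 B P_closed finite_I in \<open>auto simp: rees_carrier_def\<close>)
qed

end

theorem mainTheorem18:
  fixes G :: "('g, 'b) monoid_scheme"
    and I :: "'i set" and L :: "'l set"
    and P :: "'l \<Rightarrow> 'i \<Rightarrow> 'g"
  assumes "group G"
    and "\<exists>B. finite B \<and> B \<subseteq> carrier G \<and> generate G B = carrier G"
    and "finite I" and "I \<noteq> {}"
    and "finite L" and "L \<noteq> {}"
    and "\<And>l i. l \<in> L \<Longrightarrow> i \<in> I \<Longrightarrow> P l i \<in> carrier G"
  shows "\<forall>A B. finite A \<and> sg_generates (rees_carrier G I L) (rees_mult G P) A
           \<and> finite B \<and> sg_generates (carrier G) (\<otimes>\<^bsub>G\<^esub>) B \<longrightarrow>
           ends_antichain (right_cayley (rees_carrier G I L) (rees_mult G P) A)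
         \<and> ends (right_cayley (rees_carrier G I L) (rees_mult G P) A)
             \<approx> I \<times> ends (right_cayley (carrier G) (\<otimes>\<^bsub>G\<^esub>) B)
         \<and> ends_antichain (left_cayley (rees_carrier G I L) (rees_mult G P) A)
         \<and> ends (left_cayley (rees_carrier G I L) (rees_mult G P) A)
             \<approx> L \<times> ends (right_cayley (carrier G) (\<otimes>\<^bsub>G\<^esub>) B)"
proof (intro allI impI, elim conjE)
  fix A B
  assume A: "finite A" "sg_generates (rees_carrier G I L) (rees_mult G P) A"
    and B: "finite B" "sg_generates (carrier G) (\<otimes>\<^bsub>G\<^esub>) B"
  interpret rees_matrix_semigroup G I L P
    using assms by (simp add: rees_matrix_semigroup_def rees_matrix_semigroup_axioms_def)
  obtain i0 l0 where i0: "i0 \<in> I" and l0: "l0 \<in> L" using assms(4,6) by blast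
  note right = cayley_copies_of_group.ends_antichain_and_eqpoll[OF cayley_copies_right[OF A B i0 l0]]
  note left = cayley_copies_of_group.ends_antichain_and_eqpoll[OF cayley_copies_left[OF A B i0 l0]]
  show "ends_antichain (right_cayley (rees_carrier G I L) (rees_mult G P) A)
      \<and> ends (right_cayley (rees_carrier G I L) (rees_mult G P) A)
          \<approx> I \<times> ends (right_cayley (carrier G) (\<otimes>\<^bsub>G\<^esub>) B)
      \<and> ends_antichain (left_cayley (rees_carrier G I L) (rees_mult G P) A)
      \<and> ends (left_cayley (rees_carrier G I L) (rees_mult G P) A)
          \<approx> L \<times> ends (right_cayley (carrier G) (\<otimes>\<^bsub>G\<^esub>) B)"
    using right left unfolding left_cayley_eq_right_cayley_flip by blast
qed

end
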